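(* Let $(X,\mathcal{A},\mu,\tau,C_\tau)$ be a composition dynamical system on $\mathbb{L}^{\varphi,h}(\mu)$, where in addition $\tau$ is bijective and $\tau^{-1}$ satisfies $\mu(\tau(A))\le M'\mu(A)$ for all $A\in\mathcal{A}$ and some $M'>0$ (so $C_\tau$ is invertible with $C_\tau^{-1}=C_{\tau^{-1}}$), and assume $\varphi$ satisfies the $\Delta_2$-condition. Then $C_\tau$ is uniformly expansive if and only if $\mathcal{A}^+=\{A\in\mathcal{A}:0<\mu(A)<\infty\}$ can be written as $\mathcal{A}^+=\mathcal{A}^+_B\cup\mathcal{A}^+_C$ such that $$\lim_{n\to\infty}\frac{\varphi^{-1}\!\left(\frac{1}{\int_0^{\mu(A)}h(t)\,dt}\right)}{\varphi^{-1}\!\left(\frac{1}{\int_0^{\mu(\tau^{n}(A))}h(t)\,dt}\right)}=\infty \text{ uniformly on } \mathcal{A}^+_B,$$ and $$\lim_{n\to\infty}\frac{\varphi^{-1}\!\left(\frac{1}{\int_0^{\mu(A)}h(t)\,dt}\right)}{\varphi^{-1}\!\left(\frac{1}{\int_0^{\mu(\tau^{-n}(A))}h(t)\,dt}\right)}=\infty \text{ uniformly on } \mathcal{A}^+_C.$$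
   Context: Let $(X,\mathcal{A},\mu)$ be a measure space. For a measurable $g$, its distribution function is $\mu_g(\lambda)=\mu\{x:|g(x)|>\lambda\}$ and its non-increasing rearrangement is $g^*(t)=\inf\{\lambda>0:\mu_g(\lambda)\le t\}$. An Orlicz function is a convex $\varphi:[0,\infty)\to[0,\infty)$ with $\varphi(0)=0$ and $\varphi(s)\to\infty$ as $s\to\infty$; here $\varphi$ is assumed continuous and strictly increasing, and $\varphi^{-1}$ denotes its inverse. $\varphi$ satisfies the $\Delta_2$-condition if there is $K>0$ with $\varphi(2s)\le K\varphi(s)$ for all $s>0$. A weight is a locally integrable, non-increasing function $h:[0,\mu(X))\to(0,\infty)$. The Orlicz–Lorentz space is $\mathbb{L}^{\varphi,h}(\mu)=\{g \text{ measurable}: I_{\varphi,h}(\lambda g)<\infty \text{ for some }\lambda>0\}$ with $I_{\varphi,h}(g)=\int_0^{\mu(X)}\varphi(g^*(t))h(t)\,dt$, normed by $\|g\|_{\varphi,h}=\inf\{\lambda>0: I_{\varphi,h}(g/\lambda)\le 1\}$ (functions equal a.e. identified). For $A\in\mathcal{A}$ with $0<\mu(A)<\infty$ one has $\|\chi_A\|_{\varphi,h}=1/\varphi^{-1}\big(1/\int_0^{\mu(A)}h(t)\,dt\big)$. A composition dynamical system $(X,\mathcal{A},\mu,\tau,C_\tau)$ means: $(X,\mathcal{A},\mu)$ is $\sigma$-finite; $\tau:X\to X$ is injective and bi-measurable; there is $M>0$ with $\mu(\tau^{-1}(A))\le M\mu(A)$ for all $A\in\mathcal{A}$; and $C_\tau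 g=g\circ\tau$ is the (bounded) composition operator on $\mathbb{L}^{\varphi,h}(\mu)$. An invertible bounded operator $T$ on a Banach space $Y$ with unit sphere $S_Y$ is uniformly expansive if there is $n\in\mathbb{N}$ such that for every $y\in S_Y$, $\|T^n y\|\ge2$ or $\|T^{-n}y\|\ge2$ (equivalently, $S_Y=B\cup C$ with $\|T^n y\|\to\infty$ uniformly on $B$ and $\|T^{-n}y\|\to\infty$ uniformly on $C$ as $n\to\infty$). *)

theory Defs
  imports "HOL-Analysis.Analysis"
begin

definition orlicz_function :: "(real \<Rightarrow> real) \<Rightarrow> bool" where
  "orlicz_function \<phi> \<longleftrightarrow>
     convex_on {0..} \<phi> \<and> \<phi> 0 = 0 \<and> (\<forall>s\<ge>0. \<phi> s \<ge> 0) \<and>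
     filterlim \<phi> at_top at_top \<and>
     continuous_on {0..} \<phi> \<and> strict_mono_on {0..} \<phi>"

definition delta2 :: "(real \<Rightarrow> real) \<Rightarrow> bool" where
  "delta2 \<phi> \<longleftrightarrow> (\<exists>K>0. \<forall>s>0. \<phi> (2 * s) \<le> K * \<phi> s)"

definition phi_inv :: "(real \<Rightarrow> real) \<Rightarrow> real \<Rightarrow> real" where
  "phi_inv \<phi> = inv_into {0..} \<phi>"

definition wdom :: "'a measure \<Rightarrow> real set" where
  "wdom M = {t. 0 \<le> t \<and> ennreal t < emeasure M (space M)}"

definition weight :: "'a measure \<Rightarrow> (real \<Rightarrow> real) \<Rightarrow> bool" where
  "weight M h \<longleftrightarrow>
     (\<forall>t\<in>wdom M. h t > 0) \<and>
     (\<forall>s\<in>wdom M. \<forall>t\<in>wdom M. s \<le> t \<longrightarrow> h t \<le> h s) \<and>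
     (\<forall>b\<in>wdom M. set_integrable lborel {0..b} h)"

definition distr_fun :: "'a measure \<Rightarrow> ('a \<Rightarrow> real) \<Rightarrow> real \<Rightarrow> ennreal" where
  "distr_fun M g c = emeasure M {x \<in> space M. c < \<bar>g x\<bar>}"

text \<open>Non-increasing rearrangement; value \<infinity> if the defining set is empty.\<close>
definition rearr :: "'a measure \<Rightarrow> ('a \<Rightarrow> real) \<Rightarrow> real \<Rightarrow> ennreal" where
  "rearr M g t = (INF c\<in>{c::real. 0 < c \<and> distr_fun M g c \<le> ennreal t}. ennreal c)"

definition phi_ext :: "(real \<Rightarrow> real) \<Rightarrow> ennreal \<Rightarrow> ennreal" where
  "phi_ext \<phi> x = (if x = \<infinity> then \<infinity> else ennreal (\<phi> (enn2real x)))"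

definition modular :: "(real \<Rightarrow> real) \<Rightarrow> (real \<Rightarrow> real) \<Rightarrow> 'a measure \<Rightarrow> ('a \<Rightarrow> real) \<Rightarrow> ennreal" where
  "modular \<phi> h M g =
     (\<integral>\<^sup>+ t \<in> wdom M. phi_ext \<phi> (rearr M g t) * ennreal (h t) \<partial>lborel)"

definition OL_space :: "(real \<Rightarrow> real) \<Rightarrow> (real \<Rightarrow> real) \<Rightarrow> 'a measure \<Rightarrow> ('a \<Rightarrow> real) set" where
  "OL_space \<phi> h M = {g \<in> borel_measurable M. \<exists>c>0. modular \<phi> h M (\<lambda>x. c * g x) < \<infinity>}"

definition OL_norm :: "(real \<Rightarrow> real) \<Rightarrow> (real \<Rightarrow> real) \<Rightarrow> 'a measure \<Rightarrow> ('a \<Rightarrow> real) \<Rightarrow> real" where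
  "OL_norm \<phi> h M g = Inf {c::real. 0 < c \<and> modular \<phi> h M (\<lambda>x. g x / c) \<le> 1}"

definition comp_dyn_system ::
  "(real \<Rightarrow> real) \<Rightarrow> (real \<Rightarrow> real) \<Rightarrow> 'a measure \<Rightarrow> ('a \<Rightarrow> 'a) \<Rightarrow> bool" where
  "comp_dyn_system \<phi> h M \<tau> \<longleftrightarrow>
     sigma_finite_measure M \<and> orlicz_function \<phi> \<and> weight M h \<and>
     \<tau> \<in> measurable M M \<and> inj_on \<tau> (space M) \<and>
     (\<forall>A\<in>sets M. \<tau> ` A \<in> sets M) \<and>
     (\<exists>c>0. \<forall>A\<in>sets M. emeasure M (\<tau> -` A \<inter> space M) \<le> ennreal c * emeasure M A) \<and>
     (\<exists>c. \<forall>g\<in>OL_space \<phi> h M. (g \<circ> \<tau>) \<in> OL_space \<phi> h M \<and>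
            OL_norm \<phi> h M (g \<circ> \<tau>) \<le> c * OL_norm \<phi> h M g)"

text \<open>Uniform expansivity of C_tau (with inverse C_{tau^{-1}}) on the unit sphere.
  Elements of the space are represented by functions; the norm does not depend
  on the representative of an a.e. class.\<close>
definition comp_unif_expansive ::
  "(real \<Rightarrow> real) \<Rightarrow> (real \<Rightarrow> real) \<Rightarrow> 'a measure \<Rightarrow> ('a \<Rightarrow> 'a) \<Rightarrow> bool" where
  "comp_unif_expansive \<phi> h M \<tau> \<longleftrightarrow>
     (\<exists>n::nat. \<forall>g\<in>OL_space \<phi> h M. OL_norm \<phi> h M g = 1 \<longrightarrow>
        OL_norm \<phi> h M (g \<circ> (\<tau> ^^ n)) \<ge> 2 \<or>
        OL_norm \<phi> h M (g \<circ> (inv_into (space M) \<tau> ^^ n)) \<ge> 2)"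

definition Wint :: "(real \<Rightarrow> real) \<Rightarrow> real \<Rightarrow> real" where
  "Wint h s = (LINT t:{0..<s}|lborel. h t)"

text \<open>phi^{-1}(1/W(mu A)), i.e. 1 / norm of the indicator of A.\<close>
definition fund :: "(real \<Rightarrow> real) \<Rightarrow> (real \<Rightarrow> real) \<Rightarrow> 'a measure \<Rightarrow> 'a set \<Rightarrow> real" where
  "fund \<phi> h M A = phi_inv \<phi> (1 / Wint h (measure M A))"

definition Aplus :: "'a measure \<Rightarrow> 'a set set" where
  "Aplus M = {A \<in> sets M. 0 < emeasure M A \<and> emeasure M A < \<infinity>}"

end

theory Submission
  imports Defs
begin

text \<open>
  For \<open>A\<close> with \<open>0 < \<mu> A < \<infinity>\<close> the indicator \<open>a \<chi>\<^sub>A\<close> has norm \<open>a / fund A\<close>, and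
  \<open>\<chi>\<^sub>A \<circ> \<tau>\<^sup>n = \<chi>\<^bsub>\<tau>\<^sup>-\<^sup>n A\<^esub>\<close>. If \<open>C\<^sub>\<tau>\<close> is uniformly expansive with exponent \<open>n\<close>, testing it on
  normalised indicators shows that every \<open>A\<close> has \<open>fund\<close> halved by \<open>\<tau>\<^sup>n\<close> or by \<open>\<tau>\<^sup>-\<^sup>n\<close>. A set
  halved in one direction is not halved in the other at its image, so the direction persists under
  iteration and \<open>fund\<close> decays geometrically along it; the boundedness of \<open>C\<^sub>\<tau>\<close> controls the
  steps in between.

  Conversely, write \<open>W m = \<integral>\<^sub>0\<^sup>m h\<close>. The layer cake formula
  \<open>I (g) = \<integral>\<^sub>0\<^sup>\<infinity> W (\<mu>\<^sub>g (phi_inv \<phi> s)) ds\<close> reduces the modular to the sets \<open>{\<bar>g\<bar> > c}\<close>.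
  Once the ratios of \<open>fund\<close> exceed \<open>K\<close> at step \<open>n\<close>, the concavity of \<open>phi_inv\<close> turns them
  into \<open>K W(\<mu> E) \<le> W(\<mu> (\<tau>\<^sup>n E)) + W(\<mu> (\<tau>\<^sup>-\<^sup>n E))\<close> for every measurable \<open>E\<close>, hence
  \<open>K I(g) \<le> I(g \<circ> \<tau>\<^sup>-\<^sup>n) + I(g \<circ> \<tau>\<^sup>n)\<close>. For \<open>\<parallel>g\<parallel> = 1\<close> the \<open>\<Delta>\<^sub>2\<close> constant \<open>K\<^sub>d\<close>
  gives \<open>K\<^sub>d I(g) > 1\<close>, so with \<open>K = 2 K\<^sub>d\<^sup>2 + 1\<close> one of the two modulars exceeds \<open>K\<^sub>d\<close>,
  which by \<open>\<Delta>\<^sub>2\<close> again forces the corresponding norm to be at least \<open>2\<close>.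
\<close>

section \<open>Orlicz functions\<close>

lemma orlicz_less:
  assumes "orlicz_function \<phi>" "0 \<le> x" "x < y" shows "\<phi> x < \<phi> y"
  using assms unfolding orlicz_function_def strict_mono_on_def by auto

lemma orlicz_mono:
  assumes "orlicz_function \<phi>" "0 \<le> x" "x \<le> y" shows "\<phi> x \<le> \<phi> y"
  using orlicz_less[OF assms(1,2), of y] assms(3) by (cases "x = y") auto

lemma orlicz_nonneg: "orlicz_function \<phi> \<Longrightarrow> 0 \<le> x \<Longrightarrow> 0 \<le> \<phi> x"
  unfolding orlicz_function_def by auto

lemma orlicz_zero: "orlicz_function \<phi> \<Longrightarrow> \<phi> 0 = 0"
  unfolding orlicz_function_def by auto

lemma orlicz_pos: "orlicz_function \<phi> \<Longrightarrow> 0 < x \<Longrightarrow> 0 < \<phi> x"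
  using orlicz_less[of \<phi> 0 x] orlicz_zero[of \<phi>] by auto

lemma orlicz_image:
  assumes o: "orlicz_function \<phi>"
  shows "\<phi> ` {0..} = {0..}"
proof (intro equalityI subsetI)
  fix y :: real assume "y \<in> {0..}"
  then have y: "0 \<le> y" by simp
  have "filterlim \<phi> at_top at_top" using o unfolding orlicz_function_def by auto
  then obtain b where b: "\<And>x. x \<ge> b \<Longrightarrow> y \<le> \<phi> x"
    by (auto simp: filterlim_at_top eventually_at_top_linorder)
  define c where "c = max b 0"
  have "\<phi> 0 \<le> y" "y \<le> \<phi> c" "0 \<le> c" using b orlicz_zero[OF o] y by (auto simp: c_def)
  moreover have "continuous_on {0..c} \<phi>"
    using o unfolding orlicz_function_def by (auto intro: continuous_on_subset)
  ultimately obtain x where "0 \<le> x" "\<phi> x = y"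
    using IVT'[of \<phi> 0 y c] by auto
  then show "y \<in> \<phi> ` {0..}" by auto
qed (use orlicz_nonneg[OF o] in auto)

lemma
  assumes o: "orlicz_function \<phi>" and y: "0 \<le> y"
  shows phi_inv_nonneg: "0 \<le> phi_inv \<phi> y"
    and phi_phi_inv: "\<phi> (phi_inv \<phi> y) = y"
proof -
  have "y \<in> \<phi> ` {0..}" using orlicz_image[OF o] y by simp
  then show "0 \<le> phi_inv \<phi> y" "\<phi> (phi_inv \<phi> y) = y"
    unfolding phi_inv_def using inv_into_into[of y \<phi> "{0..}"] f_inv_into_f[of y \<phi> "{0..}"] by auto
qed

lemma le_phi_inv_iff:
  assumes o: "orlicz_function \<phi>" and "0 \<le> x" "0 \<le> y"
  shows "\<phi> x \<le> y \<longleftrightarrow> x \<le> phi_inv \<phi> y"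
  using phi_inv_nonneg[OF o assms(3)] phi_phi_inv[OF o assms(3)]
    orlicz_mono[OF o, of x "phi_inv \<phi> y"] orlicz_less[OF o, of "phi_inv \<phi> y" x] assms
  by force

lemma phi_inv_less_iff:
  assumes o: "orlicz_function \<phi>" and "0 \<le> x" "0 \<le> y"
  shows "y < \<phi> x \<longleftrightarrow> phi_inv \<phi> y < x"
  using le_phi_inv_iff[OF assms] by linarith

lemma phi_inv_mono:
  assumes o: "orlicz_function \<phi>" and "0 \<le> x" "x \<le> y"
  shows "phi_inv \<phi> x \<le> phi_inv \<phi> y"
  using le_phi_inv_iff[OF o phi_inv_nonneg[OF o assms(2)], of y] phi_phi_inv[OF o assms(2)] assms
  by auto

lemma phi_inv_pos:
  assumes o: "orlicz_function \<phi>" and "0 < y"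
  shows "0 < phi_inv \<phi> y"
  using phi_inv_nonneg[OF o, of y] phi_phi_inv[OF o, of y] assms orlicz_zero[OF o]
  by (metis less_eq_real_def)

lemma orlicz_mult_le:
  assumes o: "orlicz_function \<phi>" and "0 \<le> t" "t \<le> 1" "0 \<le> x"
  shows "\<phi> (t * x) \<le> t * \<phi> x"
proof -
  have "convex_on {0..} \<phi>" using o unfolding orlicz_function_def by auto
  then have "\<phi> ((1 - t) *\<^sub>R 0 + t *\<^sub>R x) \<le> (1 - t) * \<phi> 0 + t * \<phi> x"
    using assms by (intro convex_onD) auto
  then show ?thesis using orlicz_zero[OF o] by simp
qed

text \<open>Concavity of \<open>phi_inv\<close>: \<open>phi_inv y / y\<close> does not increase.\<close>
lemma phi_inv_ratio_le:
  assumes o: "orlicz_function \<phi>" and "0 < y" "y \<le> z"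
  shows "phi_inv \<phi> z * y \<le> phi_inv \<phi> y * z"
proof -
  define t where "t = y / z"
  have t: "0 \<le> t" "t \<le> 1" using assms by (auto simp: t_def)
  have "\<phi> (t * phi_inv \<phi> z) \<le> t * z"
    using orlicz_mult_le[OF o t phi_inv_nonneg[OF o]] phi_phi_inv[OF o] assms by simp
  also have "t * z = y" using assms by (simp add: t_def)
  finally have "t * phi_inv \<phi> z \<le> phi_inv \<phi> y"
    using le_phi_inv_iff[OF o] t phi_inv_nonneg[OF o] assms by simp
  then show ?thesis using assms by (simp add: t_def field_simps)
qed

section \<open>Rearrangements and the layer cake formula\<close>

lemma borel_measurable_antimono:
  fixes F :: "real \<Rightarrow> 'b::{linorder_topology, second_countable_topology}"
  assumes antimono: "\<And>x y. x \<le> y \<Longrightarrow> F y \<le> F x"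
  shows "F \<in> borel_measurable borel"
proof (rule borel_measurableI_greater)
  fix y
  define S where "S = {x. y < F x}"
  have "mono (\<lambda>x. - indicator S x :: real)"
    unfolding mono_def S_def using antimono by (auto simp: indicator_def intro: less_le_trans)
  then have "(\<lambda>x. - (- indicator S x :: real)) \<in> borel_measurable borel"
    by (intro borel_measurable_uminus borel_measurable_mono)
  then have "S \<in> sets borel" using borel_measurable_indicator_iff[of S borel, where 'x=real] by simp
  then show "{x \<in> space borel. y < F x} \<in> sets borel" unfolding S_def by simp
qed

lemma emeasure_lborel_ennreal_less:
  "emeasure lborel {s::real. 0 \<le> s \<and> ennreal s < e} = e"
proof (cases e)
  case (real r)
  then have "{s::real. 0 \<le> s \<and> ennreal s < e} = {0..<r}"
    by (auto simp: ennreal_less_iff)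
  then show ?thesis using real by simp
next
  case top
  have "ennreal (of_nat n) \<le> emeasure lborel {0::real..}" for n
    using emeasure_mono[of "{0..of_nat n}" "{0::real..}" lborel] by simp
  then have "(SUP n. of_nat n :: ennreal) \<le> emeasure lborel {0::real..}"
    by (intro SUP_least) (simp add: ennreal_of_nat_eq_real_of_nat)
  then show ?thesis using top ennreal_SUP_of_nat_eq_top by (simp add: top_unique atLeast_def)
qed

lemma distr_fun_antimono:
  assumes "g \<in> borel_measurable M" and "a \<le> b"
  shows "distr_fun M g b \<le> distr_fun M g a"
  unfolding distr_fun_def using assms by (intro emeasure_mono) auto

lemma rearr_antimono: "s \<le> t \<Longrightarrow> rearr M g t \<le> rearr M g s"
  unfolding rearr_def by (rule INF_superset_mono) (auto intro: order_trans ennreal_leI)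

lemma phi_ext_mono:
  assumes o: "orlicz_function \<phi>" and "x \<le> y"
  shows "phi_ext \<phi> x \<le> phi_ext \<phi> y"
proof (cases "y = \<infinity>")
  case False
  then have "x \<noteq> \<infinity>" "enn2real x \<le> enn2real y"
    using assms(2) by (auto simp: top_unique enn2real_mono top.not_eq_extremum)
  then show ?thesis using False orlicz_mono[OF o, of "enn2real x" "enn2real y"]
    by (simp add: phi_ext_def ennreal_leI)
qed (simp add: phi_ext_def)

lemma distr_fun_right_continuous:
  assumes g: "g \<in> borel_measurable M"
  shows "distr_fun M g l = (SUP k. distr_fun M g (l + 1 / Suc k))"
proof -
  define A where "A k = {x \<in> space M. l + 1 / Suc k < \<bar>g x\<bar>}" for k :: nat
  have "range A \<subseteq> sets M" unfolding A_def using g by auto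
  moreover have "incseq A"
    by (intro incseq_SucI) (auto simp: A_def frac_le intro: le_less_trans[rotated])
  moreover have "(\<Union>k. A k) = {x \<in> space M. l < \<bar>g x\<bar>}"
  proof (intro equalityI subsetI)
    fix x assume x: "x \<in> {x \<in> space M. l < \<bar>g x\<bar>}"
    then obtain k where "1 / Suc k < \<bar>g x\<bar> - l"
      using nat_approx_posE[of "\<bar>g x\<bar> - l"] by auto
    then have "l + 1 / Suc k < \<bar>g x\<bar>" by simp
    then show "x \<in> (\<Union>k. A k)" using x unfolding A_def by blast
  qed (auto simp: A_def intro: le_less_trans[rotated])
  ultimately have "distr_fun M g l = (SUP k. emeasure M (A k))"
    using SUP_emeasure_incseq[of A M] unfolding distr_fun_def by simp
  then show ?thesis by (simp add: A_def distr_fun_def)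
qed

lemma rearr_le_iff:
  assumes g: "g \<in> borel_measurable M" and l: "0 \<le> l" and t: "0 \<le> t"
  shows "rearr M g t \<le> ennreal l \<longleftrightarrow> distr_fun M g l \<le> ennreal t"
proof
  assume le: "rearr M g t \<le> ennreal l"
  have "distr_fun M g (l + 1 / Suc k) \<le> ennreal t" for k
  proof -
    have "rearr M g t < ennreal (l + 1 / Suc k)"
      using l by (intro le_less_trans[OF le]) (simp add: ennreal_less_iff)
    then obtain c where c: "0 < c" "distr_fun M g c \<le> ennreal t" "ennreal c < ennreal (l + 1 / Suc k)"
      unfolding rearr_def INF_less_iff by auto
    then have "c \<le> l + 1 / Suc k"
      using l ennreal_less_iff[of c "l + 1 / Suc k"] by (simp del: ennreal_plus)
    then show ?thesis using distr_fun_antimono[OF g] c(2) order_trans by blast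
  qed
  then show "distr_fun M g l \<le> ennreal t"
    unfolding distr_fun_right_continuous[OF g, of l] by (rule SUP_least)
next
  assume le: "distr_fun M g l \<le> ennreal t"
  show "rearr M g t \<le> ennreal l"
  proof (rule ennreal_le_epsilon)
    fix e :: real assume e: "0 < e"
    have "distr_fun M g (l + e) \<le> ennreal t"
      using distr_fun_antimono[OF g, of l "l + e"] e le by auto
    then have "rearr M g t \<le> ennreal (l + e)"
      unfolding rearr_def using l e by (intro INF_lower2[of "l + e"]) auto
    then show "rearr M g t \<le> ennreal l + ennreal e" using l e by (simp add: ennreal_plus)
  qed
qed

lemma ennreal_less_rearr_iff:
  assumes "g \<in> borel_measurable M" "0 \<le> l" "0 \<le> t"
  shows "ennreal l < rearr M g t \<longleftrightarrow> ennreal t < distr_fun M g l"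
  using rearr_le_iff[OF assms] by (simp add: not_le[symmetric])

lemma ennreal_less_phi_ext_iff:
  assumes o: "orlicz_function \<phi>" and s: "0 \<le> s"
  shows "ennreal s < phi_ext \<phi> x \<longleftrightarrow> ennreal (phi_inv \<phi> s) < x"
proof (cases x)
  case (real r)
  then show ?thesis
    using phi_inv_less_iff[OF o _ s, of r] phi_inv_nonneg[OF o s] s orlicz_nonneg[OF o, of r]
    by (simp add: phi_ext_def ennreal_less_iff)
qed (simp add: phi_ext_def)

definition weight_ext :: "'a measure \<Rightarrow> (real \<Rightarrow> real) \<Rightarrow> real \<Rightarrow> real" where
  "weight_ext M h t = (if t \<in> wdom M then h t else 0)"

text \<open>\<open>Wext M h m\<close> is the paper's \<open>W(m) = \<integral>\<^sub>0\<^sup>m h(t) dt\<close>, allowing \<open>m = \<infinity>\<close>.\<close>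
definition Wext :: "'a measure \<Rightarrow> (real \<Rightarrow> real) \<Rightarrow> ennreal \<Rightarrow> ennreal" where
  "Wext M h m = (\<integral>\<^sup>+ t. ennreal (weight_ext M h t) * indicator {t. ennreal t < m} t \<partial>lborel)"

lemma wdom_downward_closed: "t \<in> wdom M \<Longrightarrow> 0 \<le> s \<Longrightarrow> s \<le> t \<Longrightarrow> s \<in> wdom M"
  unfolding wdom_def by (auto intro: le_less_trans ennreal_leI)

lemma weight_ext_nonneg: "weight M h \<Longrightarrow> 0 \<le> weight_ext M h t"
  unfolding weight_ext_def weight_def by (auto simp: less_imp_le)

lemma borel_measurable_weight_ext [measurable]:
  assumes w: "weight M h"
  shows "weight_ext M h \<in> borel_measurable borel"
proof -
  have antimono: "weight_ext M h y \<le> weight_ext M h x" if "0 \<le> x" "x \<le> y" for x y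
  proof (cases "y \<in> wdom M")
    case True
    then have "x \<in> wdom M" using wdom_downward_closed that by blast
    then show ?thesis using True that w unfolding weight_ext_def weight_def by auto
  qed (use weight_ext_nonneg[OF w, of x] in \<open>simp add: weight_ext_def\<close>)
  define g where "g t = weight_ext M h (max t 0)" for t
  have "g \<in> borel_measurable borel"
    using antimono unfolding g_def by (intro borel_measurable_antimono) auto
  moreover have "weight_ext M h = (\<lambda>t. (if 0 \<le> t then 1 else 0) * g t)"
    by (auto simp: g_def weight_ext_def wdom_def)
  ultimately show ?thesis by simp
qed

lemma modular_eq_nn_integral:
  "modular \<phi> h M g = (\<integral>\<^sup>+ t. phi_ext \<phi> (rearr M g t) * ennreal (weight_ext M h t) \<partial>lborel)"
  unfolding modular_def by (intro nn_integral_cong) (auto simp: weight_ext_def indicator_def)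

lemma borel_measurable_modular_integrand:
  assumes o: "orlicz_function \<phi>" and w: "weight M h"
  shows "(\<lambda>t. phi_ext \<phi> (rearr M g t) * ennreal (weight_ext M h t)) \<in> borel_measurable lborel"
proof -
  have [measurable]: "(\<lambda>t. phi_ext \<phi> (rearr M g t)) \<in> borel_measurable borel"
    by (rule borel_measurable_antimono) (intro phi_ext_mono[OF o] rearr_antimono)
  show ?thesis using w by measurable
qed

lemma Wext_mono: "m \<le> m' \<Longrightarrow> Wext M h m \<le> Wext M h m'"
  unfolding Wext_def by (intro nn_integral_mono) (auto simp: indicator_def intro: less_le_trans)

lemma borel_measurable_layer_cake_integrand:
  assumes o: "orlicz_function \<phi>" and g: "g \<in> borel_measurable M"
  shows "(\<lambda>s. indicator {0..} s * Wext M h (distr_fun M g (phi_inv \<phi> s))) \<in> borel_measurable lborel"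
proof -
  define F where "F s = Wext M h (distr_fun M g (phi_inv \<phi> (max s 0)))" for s
  have "F y \<le> F x" if "x \<le> y" for x y
    unfolding F_def using that
    by (intro Wext_mono distr_fun_antimono[OF g] phi_inv_mono[OF o]) auto
  then have [measurable]: "F \<in> borel_measurable borel" by (intro borel_measurable_antimono)
  have "(\<lambda>s. indicator {0..} s * Wext M h (distr_fun M g (phi_inv \<phi> s))) = (\<lambda>s. indicator {0..} s * F s)"
    by (auto simp: F_def indicator_def)
  also have "\<dots> \<in> borel_measurable lborel" by measurable
  finally show ?thesis .
qed

lemma phi_ext_rearr_eq_emeasure:
  assumes o: "orlicz_function \<phi>" and g: "g \<in> borel_measurable M" and t: "0 \<le> t"
  shows "phi_ext \<phi> (rearr M g t) = emeasure lborel {s. 0 \<le> s \<and> ennreal t < distr_fun M g (phi_inv \<phi> s)}"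
proof -
  have "ennreal s < phi_ext \<phi> (rearr M g t) \<longleftrightarrow> ennreal t < distr_fun M g (phi_inv \<phi> s)" if "0 \<le> s" for s
    using ennreal_less_phi_ext_iff[OF o that] ennreal_less_rearr_iff[OF g phi_inv_nonneg[OF o that] t]
    by simp
  then show ?thesis using emeasure_lborel_ennreal_less[of "phi_ext \<phi> (rearr M g t)"]
    by (metis (no_types, lifting) Collect_cong)
qed

text \<open>Fubini on the region \<open>s < \<phi> (g\<^sup>* t)\<close>, which is the region \<open>t < \<mu>\<^sub>g (phi_inv \<phi> s)\<close>.\<close>
lemma modular_layer_cake:
  assumes o: "orlicz_function \<phi>" and w: "weight M h" and g: "g \<in> borel_measurable M"
  shows "modular \<phi> h M g =
    (\<integral>\<^sup>+ s. indicator {0..} s * Wext M h (distr_fun M g (phi_inv \<phi> s)) \<partial>lborel)"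
proof -
  define D where "D s = distr_fun M g (phi_inv \<phi> (max s 0))" for s
  have "D y \<le> D x" if "x \<le> y" for x y
    unfolding D_def using that by (intro distr_fun_antimono[OF g] phi_inv_mono[OF o]) auto
  then have [measurable]: "D \<in> borel_measurable borel" by (rule borel_measurable_antimono)
  define G where "G t s = indicator {0..} s * indicator {t. ennreal t < D s} t * ennreal (weight_ext M h t)"
    for t s :: real
  have G_measurable: "case_prod G \<in> borel_measurable (lborel \<Otimes>\<^sub>M lborel)"
    unfolding G_def using w by measurable
  have "modular \<phi> h M g = (\<integral>\<^sup>+ t. (\<integral>\<^sup>+ s. G t s \<partial>lborel) \<partial>lborel)"
    unfolding modular_eq_nn_integral
  proof (intro nn_integral_cong)
    fix t :: real
    show "phi_ext \<phi> (rearr M g t) * ennreal (weight_ext M h t) = (\<integral>\<^sup>+ s. G t s \<partial>lborel)"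
    proof (cases "t \<in> wdom M")
      case True
      then have t: "0 \<le> t" by (simp add: wdom_def)
      have "{s. 0 \<le> s \<and> ennreal t < D s} \<in> sets lborel" by measurable
      moreover have "{s. 0 \<le> s \<and> ennreal t < distr_fun M g (phi_inv \<phi> s)} = {s. 0 \<le> s \<and> ennreal t < D s}"
        by (auto simp: D_def)
      ultimately have "phi_ext \<phi> (rearr M g t) = (\<integral>\<^sup>+ s. indicator {s. 0 \<le> s \<and> ennreal t < D s} s \<partial>lborel)"
        using phi_ext_rearr_eq_emeasure[OF o g t] by simp
      also have "\<dots> = (\<integral>\<^sup>+ s. indicator {0..} s * indicator {t. ennreal t < D s} t \<partial>lborel)"
        by (intro nn_integral_cong) (auto simp: indicator_def)
      finally show ?thesis unfolding G_def by (simp add: nn_integral_multc[symmetric])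
    qed (simp add: G_def weight_ext_def)
  qed
  also have "\<dots> = (\<integral>\<^sup>+ s. (\<integral>\<^sup>+ t. G t s \<partial>lborel) \<partial>lborel)"
    using lborel_pair.Fubini'[OF G_measurable] by simp
  also have "\<dots> = (\<integral>\<^sup>+ s. indicator {0..} s * Wext M h (distr_fun M g (phi_inv \<phi> s)) \<partial>lborel)"
  proof (intro nn_integral_cong)
    fix s :: real
    show "(\<integral>\<^sup>+ t. G t s \<partial>lborel) = indicator {0..} s * Wext M h (distr_fun M g (phi_inv \<phi> s))"
    proof (cases "0 \<le> s")
      case True
      have "(\<integral>\<^sup>+ t. G t s \<partial>lborel)
          = (\<integral>\<^sup>+ t. ennreal (weight_ext M h t) * indicator {t. ennreal t < D s} t \<partial>lborel)"
        using True by (intro nn_integral_cong) (simp add: G_def mult.commute)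
      then show ?thesis using True by (simp add: Wext_def D_def)
    qed (simp add: G_def)
  qed
  finally show ?thesis .
qed

lemma Wext_zero [simp]: "Wext M h 0 = 0"
  unfolding Wext_def by simp

lemma Wext_mult_le:
  assumes w: "weight M h" and a: "1 \<le> a"
  shows "Wext M h (ennreal a * m) \<le> ennreal a * Wext M h m"
proof -
  let ?f = "\<lambda>t. ennreal (weight_ext M h t) * indicator {t. ennreal t < ennreal a * m} t"
  have "?f \<in> borel_measurable borel" using w by measurable
  then have "Wext M h (ennreal a * m) = ennreal a * (\<integral>\<^sup>+ x. ?f (0 + a * x) \<partial>lborel)"
    unfolding Wext_def using nn_integral_real_affine[of ?f a 0] a by simp
  also have "\<dots> \<le> ennreal a * Wext M h m"
    unfolding Wext_def
  proof (intro mult_left_mono nn_integral_mono)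
    fix x
    show "?f (0 + a * x) \<le> ennreal (weight_ext M h x) * indicator {t. ennreal t < m} x"
    proof (cases "a * x \<in> wdom M \<and> ennreal (a * x) < ennreal a * m")
      case True
      then have x0: "0 \<le> x" using a by (auto simp: wdom_def zero_le_mult_iff)
      then have x: "0 \<le> x" "x \<le> a * x" using a by (auto simp: mult_le_cancel_right1)
      then have xw: "x \<in> wdom M" using wdom_downward_closed True by blast
      have "h (a * x) \<le> h x" using w True xw x unfolding weight_def by auto
      moreover have "ennreal x < m"
      proof (rule ccontr)
        assume "\<not> ennreal x < m"
        then have "ennreal a * m \<le> ennreal a * ennreal x" by (simp add: mult_left_mono)
        then show False using True x a by (simp add: ennreal_mult leD)
      qed
      ultimately show ?thesis using True xw by (simp add: weight_ext_def ennreal_leI)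
    qed (auto simp: weight_ext_def indicator_def)
  qed simp
  finally show ?thesis .
qed

lemma Wext_ennreal:
  assumes w: "weight M h" and m: "0 \<le> m" and mX: "ennreal m \<le> emeasure M (space M)"
  shows "Wext M h (ennreal m) = ennreal (Wint h m)"
proof (cases "m = 0")
  case True then show ?thesis by (simp add: Wint_def set_lebesgue_integral_def)
next
  case False
  have in_wdom: "t \<in> wdom M" if "0 \<le> t" "t < m" for t
    using that mX unfolding wdom_def
    by (auto intro: less_le_trans[of _ "ennreal m"] simp: ennreal_less_iff)
  have h0: "0 < h 0" using in_wdom[of 0] m False w unfolding weight_def by auto
  define f where "f t = indicator {0..<m} t * h t" for t
  have f_eq: "f t = indicator {0..<m} t * weight_ext M h t" for t
    using in_wdom by (auto simp: f_def weight_ext_def indicator_def)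
  have "norm (f t) \<le> norm (h 0 * indicator {0..<m} t :: real)" for t
  proof (cases "0 \<le> t \<and> t < m")
    case True
    then have "0 < h t" "h t \<le> h 0"
      using w in_wdom[of t] in_wdom[of 0] unfolding weight_def by auto
    then show ?thesis using True h0 by (simp add: f_def)
  qed (auto simp: f_def)
  moreover have "f \<in> borel_measurable lborel" using w unfolding f_eq[abs_def] by measurable
  moreover have "integrable lborel (\<lambda>t. h 0 * indicator {0..<m} t :: real)"
    using m by (intro integrable_mult_right integrable_real_indicator) auto
  ultimately have "integrable lborel f"
    using Bochner_Integration.integrable_bound by (metis (lifting) AE_I2)
  then have "(\<integral>\<^sup>+ t. ennreal (f t) \<partial>lborel) = ennreal (integral\<^sup>L lborel f)"
    by (rule nn_integral_eq_integral) (auto simp: f_eq weight_ext_nonneg[OF w])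
  moreover have "Wext M h (ennreal m) = (\<integral>\<^sup>+ t. ennreal (f t) \<partial>lborel)"
    unfolding Wext_def
    by (intro nn_integral_cong) (auto simp: f_eq indicator_def ennreal_less_iff weight_ext_def wdom_def)
  moreover have "integral\<^sup>L lborel f = Wint h m"
    unfolding Wint_def set_lebesgue_integral_def f_def by (simp add: mult.commute)
  ultimately show ?thesis by simp
qed

lemma Wint_pos:
  assumes w: "weight M h" and m: "0 < m" and mX: "ennreal m \<le> emeasure M (space M)"
  shows "0 < Wint h m"
proof -
  have in_wdom: "t \<in> wdom M" if "0 \<le> t" "t < m" for t
    using that mX unfolding wdom_def
    by (auto intro: less_le_trans[of _ "ennreal m"] simp: ennreal_less_iff)
  have pos: "0 < h (m/2)" using w in_wdom[of "m/2"] m unfolding weight_def by auto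
  have "0 < ennreal (h (m/2)) * ennreal (m/2)"
    using pos m by (simp add: ennreal_mult[symmetric])
  also have "\<dots> = (\<integral>\<^sup>+ t. ennreal (h (m/2)) * indicator {0..m/2} t \<partial>lborel)"
    using m by (simp add: nn_integral_cmult)
  also have "\<dots> \<le> Wext M h (ennreal m)"
    unfolding Wext_def
  proof (intro nn_integral_mono)
    fix t
    show "ennreal (h (m/2)) * indicator {0..m/2} t
        \<le> ennreal (weight_ext M h t) * indicator {t. ennreal t < ennreal m} t"
    proof (cases "0 \<le> t \<and> t \<le> m/2")
      case True
      then have "h (m/2) \<le> h t" using w in_wdom[of t] in_wdom[of "m/2"] m unfolding weight_def by auto
      then show ?thesis using True in_wdom[of t] m
        by (auto simp: weight_ext_def ennreal_less_iff ennreal_leI)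
    qed auto
  qed
  also have "\<dots> = ennreal (Wint h m)" using Wext_ennreal[OF w _ mX] m by simp
  finally show ?thesis by (simp add: ennreal_less_zero_iff)
qed

lemma Wext_SUP:
  assumes w: "weight M h" and inc: "incseq m"
  shows "Wext M h (SUP i. m i) = (SUP i. Wext M h (m i))"
proof -
  define F where "F i t = ennreal (weight_ext M h t) * indicator {t. ennreal t < m i} t" for i t
  have "incseq F"
    using inc unfolding incseq_def le_fun_def F_def
    by (auto intro!: mult_left_mono simp: indicator_def intro: less_le_trans)
  moreover have "F i \<in> borel_measurable lborel" for i
    unfolding F_def using w by measurable
  ultimately have "(\<integral>\<^sup>+ t. (SUP i. F i t) \<partial>lborel) = (SUP i. integral\<^sup>N lborel (F i))"
    by (rule nn_integral_monotone_convergence_SUP)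
  moreover have "(SUP i. F i t) = ennreal (weight_ext M h t) * indicator {t. ennreal t < (SUP i. m i)} t"
    for t
  proof (rule antisym)
    show "(SUP i. F i t) \<le> ennreal (weight_ext M h t) * indicator {t. ennreal t < (SUP i. m i)} t"
      unfolding F_def
      by (intro SUP_least mult_left_mono) (auto simp: indicator_def less_SUP_iff)
  next
    show "ennreal (weight_ext M h t) * indicator {t. ennreal t < (SUP i. m i)} t \<le> (SUP i. F i t)"
    proof (cases "ennreal t < (SUP i. m i)")
      case True
      then obtain i where "ennreal t < m i" unfolding less_SUP_iff by blast
      then have "F i t = ennreal (weight_ext M h t) * indicator {t. ennreal t < (SUP i. m i)} t"
        using True by (simp add: F_def)
      then show ?thesis by (metis SUP_upper UNIV_I)
    qed simp
  qed
  ultimately show ?thesis unfolding Wext_def F_def by simp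
qed

section \<open>Scaling of the modular and the norm\<close>

lemma distr_fun_mult:
  assumes "0 < c"
  shows "distr_fun M (\<lambda>x. c * g x) d = distr_fun M g (d / c)"
proof -
  have "{x \<in> space M. d < \<bar>c * g x\<bar>} = {x \<in> space M. d / c < \<bar>g x\<bar>}"
    using assms by (auto simp: abs_mult divide_less_eq mult.commute)
  then show ?thesis unfolding distr_fun_def by simp
qed

lemma rearr_mult_ge:
  assumes c: "0 < c"
  shows "ennreal c * rearr M g t \<le> rearr M (\<lambda>x. c * g x) t"
  unfolding rearr_def
proof (rule INF_greatest)
  fix d assume d: "d \<in> {d. 0 < d \<and> distr_fun M (\<lambda>x. c * g x) d \<le> ennreal t}"
  then have "d / c \<in> {e. 0 < e \<and> distr_fun M g e \<le> ennreal t}"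
    using c by (simp add: distr_fun_mult)
  then have "ennreal c * (INF e\<in>{e. 0 < e \<and> distr_fun M g e \<le> ennreal t}. ennreal e)
      \<le> ennreal c * ennreal (d / c)"
    by (intro mult_left_mono INF_lower) simp_all
  also have "\<dots> = ennreal d" using c d by (simp add: ennreal_mult[symmetric])
  finally show "ennreal c * (INF e\<in>{e. 0 < e \<and> distr_fun M g e \<le> ennreal t}. ennreal e) \<le> ennreal d" .
qed

lemma rearr_mult:
  assumes c: "0 < c"
  shows "rearr M (\<lambda>x. c * g x) t = ennreal c * rearr M g t"
proof (rule antisym)
  have "ennreal (1/c) * rearr M (\<lambda>x. c * g x) t \<le> rearr M (\<lambda>x. (1/c) * (c * g x)) t"
    using c by (intro rearr_mult_ge) simp
  also have "(\<lambda>x. (1/c) * (c * g x)) = g" using c by simp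
  finally have "ennreal c * (ennreal (1/c) * rearr M (\<lambda>x. c * g x) t) \<le> ennreal c * rearr M g t"
    by (rule mult_left_mono) simp
  moreover have "ennreal c * (ennreal (1/c) * rearr M (\<lambda>x. c * g x) t) = rearr M (\<lambda>x. c * g x) t"
    using c by (simp add: mult.assoc[symmetric] ennreal_mult[symmetric])
  ultimately show "rearr M (\<lambda>x. c * g x) t \<le> ennreal c * rearr M g t" by simp
qed (rule rearr_mult_ge[OF c])

lemma modular_mult_le:
  assumes o: "orlicz_function \<phi>" and w: "weight M h" and a: "0 < a"
    and phi_ext_le: "\<And>r. phi_ext \<phi> (ennreal a * r) \<le> C * phi_ext \<phi> r"
  shows "modular \<phi> h M (\<lambda>x. a * g x) \<le> C * modular \<phi> h M g"
proof -
  have "modular \<phi> h M (\<lambda>x. a * g x)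
      = (\<integral>\<^sup>+ t. phi_ext \<phi> (ennreal a * rearr M g t) * ennreal (weight_ext M h t) \<partial>lborel)"
    unfolding modular_eq_nn_integral rearr_mult[OF a] ..
  also have "\<dots> \<le> (\<integral>\<^sup>+ t. C * (phi_ext \<phi> (rearr M g t) * ennreal (weight_ext M h t)) \<partial>lborel)"
    by (intro nn_integral_mono) (simp add: mult.assoc[symmetric] mult_right_mono phi_ext_le)
  also have "\<dots> = C * modular \<phi> h M g"
    unfolding modular_eq_nn_integral
    by (rule nn_integral_cmult) (rule borel_measurable_modular_integrand[OF o w])
  finally show ?thesis .
qed

lemma modular_mult_le_of_le_1:
  assumes o: "orlicz_function \<phi>" and w: "weight M h" and a: "0 < a" "a \<le> 1"
  shows "modular \<phi> h M (\<lambda>x. a * g x) \<le> ennreal a * modular \<phi> h M g"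
proof (rule modular_mult_le[OF o w a(1)])
  fix r
  show "phi_ext \<phi> (ennreal a * r) \<le> ennreal a * phi_ext \<phi> r"
  proof (cases r)
    case (real r')
    then have "phi_ext \<phi> (ennreal a * r) = ennreal (\<phi> (a * r'))"
      using a by (simp add: phi_ext_def ennreal_mult[symmetric])
    also have "\<dots> \<le> ennreal (a * \<phi> r')"
      using orlicz_mult_le[OF o, of a r'] a real by (simp add: ennreal_leI)
    also have "\<dots> = ennreal a * phi_ext \<phi> r"
      using a real orlicz_nonneg[OF o, of r'] by (simp add: phi_ext_def ennreal_mult)
    finally show ?thesis .
  qed (use a in \<open>simp add: phi_ext_def ennreal_mult_top\<close>)
qed

lemma modular_double_le:
  assumes o: "orlicz_function \<phi>" and w: "weight M h"
    and K: "0 < K" "\<forall>s>0. \<phi> (2 * s) \<le> K * \<phi> s"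
  shows "modular \<phi> h M (\<lambda>x. 2 * g x) \<le> ennreal K * modular \<phi> h M g"
proof -
  have "phi_ext \<phi> (ennreal 2 * r) \<le> ennreal K * phi_ext \<phi> r" for r
  proof (cases r)
    case (real r')
    have "\<phi> (2 * r') \<le> K * \<phi> r'"
      using K real orlicz_zero[OF o] by (cases "r' = 0") auto
    then show ?thesis using real K orlicz_nonneg[OF o, of r']
      by (simp add: phi_ext_def ennreal_mult[symmetric] ennreal_leI del: ennreal_numeral)
  qed (use K in \<open>simp add: phi_ext_def ennreal_mult_top\<close>)
  then show ?thesis using modular_mult_le[OF o w, of 2 "ennreal K"] by simp
qed

lemma modular_mono:
  assumes o: "orlicz_function \<phi>" and g2: "g2 \<in> borel_measurable M"
    and le: "\<And>x. x \<in> space M \<Longrightarrow> \<bar>g1 x\<bar> \<le> \<bar>g2 x\<bar>"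
  shows "modular \<phi> h M g1 \<le> modular \<phi> h M g2"
proof -
  have "distr_fun M g1 c \<le> distr_fun M g2 c" for c
    unfolding distr_fun_def using g2 le by (intro emeasure_mono) (auto intro: less_le_trans)
  then have "rearr M g1 t \<le> rearr M g2 t" for t
    unfolding rearr_def by (intro INF_superset_mono) (auto intro: order_trans)
  then show ?thesis unfolding modular_def
    by (intro nn_integral_mono mult_right_mono phi_ext_mono[OF o]) auto
qed

lemma modular_le_of_distr_fun_le:
  assumes o: "orlicz_function \<phi>" and w: "weight M h"
    and g1: "g1 \<in> borel_measurable M" and g2: "g2 \<in> borel_measurable M"
    and le: "\<And>l. distr_fun M g2 l \<le> ennreal a * distr_fun M g1 l" and a: "1 \<le> a"
  shows "modular \<phi> h M g2 \<le> ennreal a * modular \<phi> h M g1"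
proof -
  have "modular \<phi> h M g2
      \<le> (\<integral>\<^sup>+ s. ennreal a * (indicator {0..} s * Wext M h (distr_fun M g1 (phi_inv \<phi> s))) \<partial>lborel)"
    unfolding modular_layer_cake[OF o w g2]
  proof (intro nn_integral_mono)
    fix s
    have "Wext M h (distr_fun M g2 (phi_inv \<phi> s)) \<le> Wext M h (ennreal a * distr_fun M g1 (phi_inv \<phi> s))"
      by (rule Wext_mono[OF le])
    also have "\<dots> \<le> ennreal a * Wext M h (distr_fun M g1 (phi_inv \<phi> s))"
      by (rule Wext_mult_le[OF w a])
    finally show "indicator {0..} s * Wext M h (distr_fun M g2 (phi_inv \<phi> s))
        \<le> ennreal a * (indicator {0..} s * Wext M h (distr_fun M g1 (phi_inv \<phi> s)))"
      by (simp add: indicator_def)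
  qed
  also have "\<dots> = ennreal a * modular \<phi> h M g1"
    unfolding modular_layer_cake[OF o w g1]
    by (rule nn_integral_cmult) (rule borel_measurable_layer_cake_integrand[OF o g1])
  finally show ?thesis .
qed

lemma OL_norm_cong:
  assumes "\<And>x. x \<in> space M \<Longrightarrow> \<bar>g1 x\<bar> = \<bar>g2 x\<bar>"
  shows "OL_norm \<phi> h M g1 = OL_norm \<phi> h M g2"
proof -
  have "distr_fun M (\<lambda>x. g1 x / c) = distr_fun M (\<lambda>x. g2 x / c)" for c
    unfolding distr_fun_def using assms by (intro ext arg_cong[where f="emeasure M"]) (auto simp: abs_divide)
  then show ?thesis unfolding OL_norm_def modular_def rearr_def by simp
qed

lemma modular_finite_of_OL_space:
  assumes o: "orlicz_function \<phi>" and w: "weight M h"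
    and K: "0 < K" "\<forall>s>0. \<phi> (2 * s) \<le> K * \<phi> s" and g: "g \<in> OL_space \<phi> h M"
  shows "modular \<phi> h M g < \<infinity>"
proof -
  obtain c where c: "0 < c" "modular \<phi> h M (\<lambda>x. c * g x) < \<infinity>"
    using g unfolding OL_space_def by auto
  have pow: "modular \<phi> h M (\<lambda>x. (2^j * c) * g x) < \<infinity>" for j :: nat
  proof (induction j)
    case (Suc j)
    have "modular \<phi> h M (\<lambda>x. (2^Suc j * c) * g x) = modular \<phi> h M (\<lambda>x. 2 * ((2^j * c) * g x))"
      by (simp add: mult.assoc)
    also have "\<dots> \<le> ennreal K * modular \<phi> h M (\<lambda>x. (2^j * c) * g x)"
      by (rule modular_double_le[OF o w K])
    also have "\<dots> < \<infinity>" using Suc by (simp add: ennreal_mult_less_top)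
    finally show ?case .
  qed (use c in simp)
  obtain j :: nat where "1 / c < 2 ^ j" using real_arch_pow[of 2 "1 / c"] by auto
  then have a: "0 < 1 / (2^j * c)" "1 / (2^j * c) \<le> 1"
    using c by (auto simp: field_simps)
  have "modular \<phi> h M g = modular \<phi> h M (\<lambda>x. (1 / (2^j * c)) * ((2^j * c) * g x))"
    using c by simp
  also have "\<dots> \<le> ennreal (1 / (2^j * c)) * modular \<phi> h M (\<lambda>x. (2^j * c) * g x)"
    by (rule modular_mult_le_of_le_1[OF o w a])
  also have "\<dots> < \<infinity>" using pow[of j] by (simp add: ennreal_mult_less_top)
  finally show ?thesis .
qed

lemma OL_norm_ge_2:
  assumes o: "orlicz_function \<phi>" and w: "weight M h"
    and K: "0 < K" "\<forall>s>0. \<phi> (2 * s) \<le> K * \<phi> s"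
    and g: "g \<in> borel_measurable M" and finite: "modular \<phi> h M g < \<infinity>"
    and big: "ennreal K < modular \<phi> h M g"
  shows "2 \<le> OL_norm \<phi> h M g"
proof (rule ccontr)
  define S where "S = {c::real. 0 < c \<and> modular \<phi> h M (\<lambda>x. g x / c) \<le> 1}"
  assume "\<not> 2 \<le> OL_norm \<phi> h M g"
  then have less: "Inf S < 2" unfolding OL_norm_def S_def by simp
  \<comment> \<open>Finiteness of the modular makes \<open>S\<close> nonempty, so \<open>Inf S\<close> is not a junk value.\<close>
  obtain B where B: "modular \<phi> h M g = ennreal B" "0 \<le> B"
    using finite by (cases "modular \<phi> h M g") auto
  have "modular \<phi> h M (\<lambda>x. (1 / (B + 1)) * g x) \<le> ennreal (1 / (B + 1)) * ennreal B"
    using modular_mult_le_of_le_1[OF o w, of "1 / (B + 1)" g] B by simp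
  also have "\<dots> \<le> 1" using B by (simp add: ennreal_mult[symmetric] divide_le_eq_1)
  finally have "B + 1 \<in> S" using B unfolding S_def by (simp add: add_nonneg_pos)
  moreover have "bdd_below S" unfolding S_def by (rule bdd_belowI[of _ 0]) auto
  ultimately obtain d where d: "0 < d" "d < 2" "modular \<phi> h M (\<lambda>x. g x / d) \<le> 1"
    using cInf_less_iff[of S 2] less unfolding S_def by auto
  have "modular \<phi> h M g = modular \<phi> h M (\<lambda>x. 2 * (g x / 2))" by simp
  also have "\<dots> \<le> ennreal K * modular \<phi> h M (\<lambda>x. g x / 2)" by (rule modular_double_le[OF o w K])
  also have "\<dots> \<le> ennreal K * modular \<phi> h M (\<lambda>x. g x / d)"
  proof (intro mult_left_mono modular_mono[OF o])
    fix x
    have "\<bar>g x\<bar> / 2 \<le> \<bar>g x\<bar> / d" using d by (intro divide_left_mono) auto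
    then show "\<bar>g x / 2\<bar> \<le> \<bar>g x / d\<bar>" using d by (simp add: abs_divide)
  qed (use g in simp_all)
  also have "\<dots> \<le> ennreal K" using mult_left_mono[OF d(3), of "ennreal K"] by simp
  finally show False using big by simp
qed

lemma modular_gt_of_OL_norm_eq_1:
  assumes o: "orlicz_function \<phi>" and w: "weight M h"
    and K: "0 < K" "\<forall>s>0. \<phi> (2 * s) \<le> K * \<phi> s" and n: "OL_norm \<phi> h M g = 1"
  shows "1 < ennreal K * modular \<phi> h M g"
proof -
  define S where "S = {c::real. 0 < c \<and> modular \<phi> h M (\<lambda>x. g x / c) \<le> 1}"
  have "bdd_below S" unfolding S_def by (rule bdd_belowI[of _ 0]) auto
  then have "1/2 \<notin> S" using n cInf_lower[of "1/2" S] unfolding OL_norm_def S_def by force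
  then have "1 < modular \<phi> h M (\<lambda>x. 2 * g x)" unfolding S_def by (simp add: mult.commute)
  also have "\<dots> \<le> ennreal K * modular \<phi> h M g" by (rule modular_double_le[OF o w K])
  finally show ?thesis .
qed

lemma modular_summand_gt_of_OL_norm_eq_1:
  assumes o: "orlicz_function \<phi>" and w: "weight M h"
    and K: "0 < K" "\<forall>s>0. \<phi> (2 * s) \<le> K * \<phi> s" and norm: "OL_norm \<phi> h M g = 1"
    and finite: "modular \<phi> h M g < \<infinity>" and le: "ennreal (2 * K\<^sup>2 + 1) * modular \<phi> h M g \<le> a + b"
  shows "ennreal K < a \<or> ennreal K < b"
proof (rule ccontr)
  obtain m where m: "modular \<phi> h M g = ennreal m" "0 \<le> m"
    using finite by (cases "modular \<phi> h M g") auto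
  have unit: "1 < K * m"
    using modular_gt_of_OL_norm_eq_1[OF o w K norm] m K
    by (simp add: ennreal_mult[symmetric] ennreal_less_iff)
  assume "\<not> ?thesis"
  then have "a + b \<le> ennreal K + ennreal K" by (intro add_mono) (simp_all add: not_less)
  then have "ennreal (2 * K\<^sup>2 + 1) * modular \<phi> h M g \<le> ennreal K + ennreal K"
    using le by (rule order_trans[rotated])
  then have bound: "(2 * K\<^sup>2 + 1) * m \<le> 2 * K"
    using m K by (simp add: ennreal_mult[symmetric] ennreal_plus[symmetric] del: ennreal_plus)
  have "2 * K\<^sup>2 + 1 < (2 * K\<^sup>2 + 1) * (K * m)"
    using mult_strict_left_mono[OF unit, of "2 * K\<^sup>2 + 1"] by (simp add: add_nonneg_pos)
  also have "\<dots> = K * ((2 * K\<^sup>2 + 1) * m)" by simp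
  also have "\<dots> \<le> K * (2 * K)" using bound K by (intro mult_left_mono) auto
  finally show False by (simp add: power2_eq_square)
qed

section \<open>Indicator functions and \<open>fund\<close>\<close>

lemma modular_indicator:
  assumes o: "orlicz_function \<phi>" and w: "weight M h" and a: "0 < a" and A: "A \<in> sets M"
  shows "modular \<phi> h M (\<lambda>x. a * indicator A x) = ennreal (\<phi> a) * Wext M h (emeasure M A)"
proof -
  have "distr_fun M (\<lambda>x. a * indicator A x) (phi_inv \<phi> s) = (if s < \<phi> a then emeasure M A else 0)"
    if s: "0 \<le> s" for s
  proof -
    have "s < \<phi> a \<longleftrightarrow> phi_inv \<phi> s < a" using phi_inv_less_iff[OF o _ s, of a] a by simp
    then have "{x \<in> space M. phi_inv \<phi> s < \<bar>a * indicator A x\<bar>} = (if s < \<phi> a then A else {})"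
      using phi_inv_nonneg[OF o s] a sets.sets_into_space[OF A] by (auto simp: indicator_def)
    then show ?thesis unfolding distr_fun_def by simp
  qed
  then have "modular \<phi> h M (\<lambda>x. a * indicator A x)
      = (\<integral>\<^sup>+ s. Wext M h (emeasure M A) * indicator {0..<\<phi> a} s \<partial>lborel)"
    using A by (subst modular_layer_cake[OF o w]) (auto intro!: nn_integral_cong simp: indicator_def)
  also have "\<dots> = Wext M h (emeasure M A) * ennreal (\<phi> a)"
    using orlicz_nonneg[OF o, of a] a by (simp add: nn_integral_cmult_indicator)
  finally show ?thesis by (simp add: mult.commute)
qed

lemma AplusD:
  assumes "A \<in> Aplus M"
  shows "A \<in> sets M" "emeasure M A = ennreal (measure M A)" "0 < measure M A"
    "ennreal (measure M A) \<le> emeasure M (space M)"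
proof -
  show A: "A \<in> sets M" using assms by (simp add: Aplus_def)
  show eq: "emeasure M A = ennreal (measure M A)"
    using assms emeasure_eq_ennreal_measure[of M A] by (auto simp: Aplus_def)
  show "0 < measure M A" using assms eq by (simp add: Aplus_def ennreal_less_zero_iff)
  show "ennreal (measure M A) \<le> emeasure M (space M)" using emeasure_space[of M A] eq by simp
qed

lemma Wint_measure_pos: "weight M h \<Longrightarrow> A \<in> Aplus M \<Longrightarrow> 0 < Wint h (measure M A)"
  using Wint_pos AplusD by blast

lemma Wext_emeasure_Aplus:
  "weight M h \<Longrightarrow> A \<in> Aplus M \<Longrightarrow> Wext M h (emeasure M A) = ennreal (Wint h (measure M A))"
  using Wext_ennreal[of M h "measure M A"] AplusD[of A M] by simp

lemma fund_pos:
  assumes o: "orlicz_function \<phi>" and w: "weight M h" and A: "A \<in> Aplus M"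
  shows "0 < fund \<phi> h M A"
  unfolding fund_def using Wint_measure_pos[OF w A] by (intro phi_inv_pos[OF o]) simp

lemma fund_less_iff:
  assumes o: "orlicz_function \<phi>" and w: "weight M h" and A: "A \<in> Aplus M" and y: "0 < y"
  shows "fund \<phi> h M A < y \<longleftrightarrow> 1 / \<phi> y < Wint h (measure M A)"
proof -
  have W: "0 < Wint h (measure M A)" by (rule Wint_measure_pos[OF w A])
  then have "fund \<phi> h M A < y \<longleftrightarrow> 1 / Wint h (measure M A) < \<phi> y"
    using phi_inv_less_iff[OF o, of y "1 / Wint h (measure M A)"] y by (simp add: fund_def)
  also have "\<dots> \<longleftrightarrow> 1 / \<phi> y < Wint h (measure M A)"
    using W orlicz_pos[OF o y] by (simp add: field_simps)
  finally show ?thesis .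
qed

lemma Wext_ratio_ge_of_fund_ratio_ge:
  assumes o: "orlicz_function \<phi>" and w: "weight M h" and A: "A \<in> Aplus M" and B: "B \<in> Aplus M"
    and K: "1 \<le> K" "K \<le> fund \<phi> h M A / fund \<phi> h M B"
  shows "ennreal K * Wext M h (emeasure M A) \<le> Wext M h (emeasure M B)"
proof -
  define yA yB where "yA = 1 / Wint h (measure M A)" and "yB = 1 / Wint h (measure M B)"
  have yA: "0 < yA" and yB: "0 < yB"
    using Wint_measure_pos[OF w A] Wint_measure_pos[OF w B] by (auto simp: yA_def yB_def)
  have ratio: "K \<le> phi_inv \<phi> yA / phi_inv \<phi> yB"
    using K by (simp add: fund_def yA_def yB_def)
  have "yB \<le> yA"
  proof (rule ccontr)
    assume "\<not> yB \<le> yA"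
    then have "phi_inv \<phi> yA < phi_inv \<phi> yB"
      using phi_inv_less_iff[OF o phi_inv_nonneg[OF o] , of yB yA] phi_phi_inv[OF o] yA yB by auto
    then have "phi_inv \<phi> yA / phi_inv \<phi> yB < 1" using phi_inv_pos[OF o yB] by simp
    then show False using ratio K by linarith
  qed
  have fB: "0 < phi_inv \<phi> yB" by (rule phi_inv_pos[OF o yB])
  have "K * yB * phi_inv \<phi> yB \<le> yB * phi_inv \<phi> yA"
    using ratio fB yB by (simp add: field_simps)
  also have "\<dots> \<le> yA * phi_inv \<phi> yB"
    using phi_inv_ratio_le[OF o yB \<open>yB \<le> yA\<close>] by (simp add: mult.commute)
  finally have "K * yB \<le> yA" using fB by simp
  then have "K * Wint h (measure M A) \<le> Wint h (measure M B)"
    using yA yB by (simp add: yA_def yB_def field_simps)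
  then show ?thesis
    using Wext_emeasure_Aplus[OF w A] Wext_emeasure_Aplus[OF w B] Wint_measure_pos[OF w A] K
    by (simp add: ennreal_mult[symmetric] ennreal_leI)
qed

lemma OL_space_indicator:
  assumes o: "orlicz_function \<phi>" and w: "weight M h" and A: "A \<in> Aplus M"
  shows "(\<lambda>x. a * indicator A x) \<in> OL_space \<phi> h M"
proof -
  have "modular \<phi> h M (\<lambda>x. 1 * (a * indicator A x)) \<le> modular \<phi> h M (\<lambda>x. (\<bar>a\<bar> + 1) * indicator A x)"
    using AplusD(1)[OF A] by (intro modular_mono[OF o]) (auto simp: indicator_def)
  also have "\<dots> < \<infinity>"
    using modular_indicator[OF o w _ AplusD(1)[OF A], of "\<bar>a\<bar> + 1"] Wext_emeasure_Aplus[OF w A]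
    by (simp add: ennreal_mult_less_top)
  finally show ?thesis using AplusD(1)[OF A] unfolding OL_space_def by (auto intro!: exI[of _ 1])
qed

lemma OL_norm_indicator:
  assumes o: "orlicz_function \<phi>" and w: "weight M h" and A: "A \<in> Aplus M" and a: "0 < a"
  shows "OL_norm \<phi> h M (\<lambda>x. a * indicator A x) = a / fund \<phi> h M A"
proof -
  define W where "W = Wint h (measure M A)"
  have W: "0 < W" using Wint_measure_pos[OF w A] by (simp add: W_def)
  have f: "0 < fund \<phi> h M A" using fund_pos[OF o w A] .
  have "modular \<phi> h M (\<lambda>x. a * indicator A x / c) \<le> 1 \<longleftrightarrow> a / fund \<phi> h M A \<le> c" if c: "0 < c" for c
  proof -
    have "modular \<phi> h M (\<lambda>x. a * indicator A x / c) = ennreal (\<phi> (a / c) * W)"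
      using modular_indicator[OF o w _ AplusD(1)[OF A], of "a / c"] Wext_emeasure_Aplus[OF w A]
        orlicz_nonneg[OF o, of "a / c"] a c W
      by (simp add: W_def ennreal_mult)
    also have "\<dots> \<le> 1 \<longleftrightarrow> \<phi> (a / c) \<le> 1 / W"
      using W by (simp add: le_divide_eq)
    also have "\<dots> \<longleftrightarrow> a / c \<le> fund \<phi> h M A"
      unfolding fund_def W_def[symmetric] using le_phi_inv_iff[OF o, of "a / c" "1 / W"] a c W by simp
    also have "\<dots> \<longleftrightarrow> a / fund \<phi> h M A \<le> c"
      using c f by (simp add: field_simps)
    finally show ?thesis .
  qed
  moreover have "0 < c" if "a / fund \<phi> h M A \<le> c" for c
    using that divide_pos_pos[OF a f] by linarith
  ultimately have "{c. 0 < c \<and> modular \<phi> h M (\<lambda>x. a * indicator A x / c) \<le> 1} = {a / fund \<phi> h M A..}"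
    by auto
  then show ?thesis unfolding OL_norm_def by simp
qed

section \<open>Sigma-finite spaces\<close>

lemma Wext_emeasure_space_SUP:
  assumes w: "weight M h" and sf: "sigma_finite_measure M"
  shows "Wext M h (emeasure M (space M)) = (SUP A\<in>Aplus M. Wext M h (emeasure M A))"
proof (rule antisym)
  obtain A :: "nat \<Rightarrow> 'a set" where A: "range A \<subseteq> sets M" "(\<Union>i. A i) = space M"
    "\<And>i. emeasure M (A i) \<noteq> \<infinity>" "incseq A"
    using sigma_finite_measure.sigma_finite_incseq[OF sf] by metis
  have "incseq (\<lambda>i. emeasure M (A i))" by (rule incseq_emeasure[OF A(1,4)])
  then have "Wext M h (emeasure M (space M)) = (SUP i. Wext M h (emeasure M (A i)))"
    using SUP_emeasure_incseq[OF A(1,4)] A(2) Wext_SUP[OF w] by metis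
  also have "\<dots> \<le> (SUP A\<in>Aplus M. Wext M h (emeasure M A))"
  proof (rule SUP_least)
    fix i
    show "Wext M h (emeasure M (A i)) \<le> (SUP A\<in>Aplus M. Wext M h (emeasure M A))"
    proof (cases "emeasure M (A i) = 0")
      case False
      then have "A i \<in> Aplus M" using A by (auto simp: Aplus_def less_top zero_less_iff_neq_zero)
      then show ?thesis by (rule SUP_upper)
    qed simp
  qed
  finally show "Wext M h (emeasure M (space M)) \<le> (SUP A\<in>Aplus M. Wext M h (emeasure M A))" .
qed (auto intro!: SUP_least Wext_mono emeasure_space simp: Aplus_def)

text \<open>If \<open>W(\<infinity>) = w\<close> is finite, \<open>fund\<close> is bounded below by \<open>b = phi_inv \<phi> (1 / w)\<close>, and
  \<open>W(\<mu> A)\<close> approaches \<open>w\<close>, so that \<open>fund A < 2 b\<close> for some \<open>A\<close>.\<close>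
lemma Aplus_fund_near_inf:
  assumes o: "orlicz_function \<phi>" and w: "weight M h" and sf: "sigma_finite_measure M"
    and X: "emeasure M (space M) = \<infinity>" and finite: "Wext M h \<infinity> \<noteq> \<infinity>"
  shows "\<exists>A\<in>Aplus M. \<forall>B\<in>Aplus M. fund \<phi> h M A < 2 * fund \<phi> h M B"
proof -
  have SUP: "Wext M h \<infinity> = (SUP A\<in>Aplus M. Wext M h (emeasure M A))"
    using Wext_emeasure_space_SUP[OF w sf] X by simp
  have "0 < ennreal (Wint h 1)" using Wint_pos[OF w] X by simp
  also have "ennreal (Wint h 1) = Wext M h (ennreal 1)" using Wext_ennreal[OF w, of 1] X by simp
  also have "\<dots> \<le> Wext M h \<infinity>" by (rule Wext_mono) simp
  finally obtain W where W: "Wext M h \<infinity> = ennreal W" "0 < W"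
    using finite by (cases "Wext M h \<infinity>") (auto simp: ennreal_less_zero_iff)
  define b where "b = phi_inv \<phi> (1 / W)"
  have b: "0 < b" "\<phi> b = 1 / W"
    using W phi_inv_pos[OF o] phi_phi_inv[OF o] by (simp_all add: b_def)
  have lower: "b \<le> fund \<phi> h M B" if B: "B \<in> Aplus M" for B
  proof -
    have "ennreal (Wint h (measure M B)) \<le> ennreal W"
      using Wext_emeasure_Aplus[OF w B] Wext_mono[of "emeasure M B" \<infinity> M h] W by simp
    then have "Wint h (measure M B) \<le> W" using W(2) by simp
    then show ?thesis using fund_less_iff[OF o w B b(1)] b by simp
  qed
  have "1 / W < \<phi> (2 * b)" using orlicz_less[OF o, of b "2 * b"] b by simp
  then have "1 < \<phi> (2 * b) * W" using W(2) by (simp add: divide_less_eq)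
  then have "1 / \<phi> (2 * b) < W"
    using orlicz_pos[OF o, of "2 * b"] b by (simp add: divide_less_eq mult.commute)
  then have "ennreal (1 / \<phi> (2 * b)) < (SUP A\<in>Aplus M. Wext M h (emeasure M A))"
    using SUP W b orlicz_pos[OF o, of "2 * b"] by (simp add: ennreal_less_iff)
  then obtain A where A: "A \<in> Aplus M" "ennreal (1 / \<phi> (2 * b)) < ennreal (Wint h (measure M A))"
    using Wext_emeasure_Aplus[OF w] unfolding less_SUP_iff by auto
  then have "fund \<phi> h M A < 2 * b"
    using fund_less_iff[OF o w A(1), of "2 * b"] b orlicz_pos[OF o, of "2 * b"]
    by (simp add: ennreal_less_iff)
  then show ?thesis using A(1) lower by force
qed

section \<open>Bijections with bounded distortion of measure\<close>

lemma funpow_inv_into: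
  assumes f: "bij_betw f S S" and x: "x \<in> S"
  shows "(inv_into S f ^^ n) x = inv_into S (f ^^ n) x"
  using x
proof (induction n arbitrary: x)
  case (Suc n)
  have fn: "bij_betw (f ^^ n) S S" by (rule bij_betw_funpow[OF f])
  define z where "z = inv_into S (f ^^ n) x"
  define y where "y = inv_into S f z"
  have z: "z \<in> S" "(f ^^ n) z = x"
    using fn Suc.prems unfolding z_def bij_betw_def by (metis inv_into_into f_inv_into_f)+
  then have y: "y \<in> S" "f y = z"
    using f unfolding y_def bij_betw_def by (metis inv_into_into f_inv_into_f)+
  then have "(f ^^ Suc n) y = x" using z unfolding funpow_Suc_right by simp
  have "(inv_into S f ^^ Suc n) x = y"
    using Suc.IH[OF Suc.prems] unfolding y_def z_def by simp
  also have "\<dots> = inv_into S (f ^^ Suc n) x"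
    using y \<open>(f ^^ Suc n) y = x\<close> bij_betw_funpow[OF f, of "Suc n"]
    by (simp add: bij_betw_def inv_into_f_eq)
  finally show ?case .
qed simp

lemma image_inv_into_bij_betw:
  assumes "bij_betw f S T" "B \<subseteq> T"
  shows "inv_into S f ` B = f -` B \<inter> S"
proof (intro equalityI subsetI)
  fix x assume "x \<in> inv_into S f ` B"
  then obtain y where "y \<in> B" "x = inv_into S f y" by blast
  then show "x \<in> f -` B \<inter> S"
    using assms inv_into_into[of y f S] f_inv_into_f[of y f S] by (auto simp: bij_betw_def)
next
  fix x assume "x \<in> f -` B \<inter> S"
  then have "x = inv_into S f (f x)" "f x \<in> B"
    using assms inv_into_f_f[of f S x] by (auto simp: bij_betw_def)
  then show "x \<in> inv_into S f ` B" by blast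
qed

lemma vimage_inv_into_bij_betw:
  assumes "bij_betw f S T" "A \<subseteq> S"
  shows "inv_into S f -` A \<inter> T = f ` A"
proof (intro equalityI subsetI)
  fix y assume y: "y \<in> inv_into S f -` A \<inter> T"
  then have "y = f (inv_into S f y)" using assms f_inv_into_f[of y f S] by (auto simp: bij_betw_def)
  then show "y \<in> f ` A" using y by blast
next
  fix y assume "y \<in> f ` A"
  then obtain x where "x \<in> A" "y = f x" by blast
  then show "y \<in> inv_into S f -` A \<inter> T"
    using assms inv_into_f_f[of f S x] by (auto simp: bij_betw_def)
qed

lemma distr_fun_comp:
  assumes "\<And>x. x \<in> space M \<Longrightarrow> f x \<in> space M"
  shows "distr_fun M (g \<circ> f) l = emeasure M (f -` {x \<in> space M. l < \<bar>g x\<bar>} \<inter> space M)"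
  unfolding distr_fun_def using assms by (intro arg_cong[where f = "emeasure M"]) auto

lemma Aplus_of_emeasure_comparable:
  assumes A: "A \<in> Aplus M" and B: "B \<in> sets M"
    and upper: "emeasure M B \<le> ennreal a * emeasure M A"
    and lower: "emeasure M A \<le> ennreal b * emeasure M B"
  shows "B \<in> Aplus M"
proof -
  have "ennreal a * emeasure M A < \<infinity>"
    using A by (simp add: Aplus_def ennreal_mult_less_top)
  then have "emeasure M B < \<infinity>" using upper by (rule le_less_trans[rotated])
  moreover have "emeasure M B \<noteq> 0" using A lower by (auto simp: Aplus_def)
  ultimately show ?thesis using B by (simp add: Aplus_def zero_less_iff_neq_zero)
qed

locale bounded_bijection =
  fixes M :: "'a measure" and \<tau> :: "'a \<Rightarrow> 'a" and c c' :: real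
  assumes bij: "bij_betw \<tau> (space M) (space M)"
    and measurable: "\<tau> \<in> M \<rightarrow>\<^sub>M M"
    and image_sets: "\<And>A. A \<in> sets M \<Longrightarrow> \<tau> ` A \<in> sets M"
    and emeasure_vimage_le: "\<And>A. A \<in> sets M \<Longrightarrow> emeasure M (\<tau> -` A \<inter> space M) \<le> ennreal c * emeasure M A"
    and emeasure_image_le: "\<And>A. A \<in> sets M \<Longrightarrow> emeasure M (\<tau> ` A) \<le> ennreal c' * emeasure M A"
    and nonneg: "0 \<le> c" "0 \<le> c'"
begin

abbreviation \<sigma> where "\<sigma> \<equiv> inv_into (space M) \<tau>"

lemma bij_iter: "bij_betw (\<tau> ^^ n) (space M) (space M)"
  by (rule bij_betw_funpow[OF bij])

lemma iter_in_space: "x \<in> space M \<Longrightarrow> (\<tau> ^^ n) x \<in> space M"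
  using bij_iter by (auto simp: bij_betw_def)

lemma inv_iter_in_space: "x \<in> space M \<Longrightarrow> (\<sigma> ^^ n) x \<in> space M"
  using bij_betw_funpow[OF bij_betw_inv_into[OF bij]] by (auto simp: bij_betw_def)

lemma measurable_iter: "\<tau> ^^ n \<in> M \<rightarrow>\<^sub>M M"
proof (induction n)
  case (Suc n)
  then show ?case using measurable_comp[OF Suc.IH measurable] by (simp add: comp_def)
qed simp

lemma image_iter_sets: "A \<in> sets M \<Longrightarrow> (\<tau> ^^ n) ` A \<in> sets M"
proof (induction n)
  case (Suc n)
  have "(\<tau> ^^ Suc n) ` A = \<tau> ` (\<tau> ^^ n) ` A" by (simp add: image_image)
  then show ?case using image_sets[OF Suc.IH[OF Suc.prems]] by simp
qed simp

lemma inv_iter_image: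
  assumes "A \<subseteq> space M"
  shows "(\<sigma> ^^ n) ` A = (\<tau> ^^ n) -` A \<inter> space M"
proof -
  have "(\<sigma> ^^ n) ` A = inv_into (space M) (\<tau> ^^ n) ` A"
    using assms funpow_inv_into[OF bij] by (intro image_cong) auto
  also have "\<dots> = (\<tau> ^^ n) -` A \<inter> space M"
    by (rule image_inv_into_bij_betw[OF bij_iter assms])
  finally show ?thesis .
qed

lemma inv_iter_vimage:
  assumes "A \<subseteq> space M"
  shows "(\<sigma> ^^ n) -` A \<inter> space M = (\<tau> ^^ n) ` A"
proof -
  have "(\<sigma> ^^ n) -` A \<inter> space M = inv_into (space M) (\<tau> ^^ n) -` A \<inter> space M"
    using funpow_inv_into[OF bij] by auto
  also have "\<dots> = (\<tau> ^^ n) ` A"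
    by (rule vimage_inv_into_bij_betw[OF bij_iter assms])
  finally show ?thesis .
qed

lemma inv_iter_image_sets: "A \<in> sets M \<Longrightarrow> (\<sigma> ^^ n) ` A \<in> sets M"
  using inv_iter_image[OF sets.sets_into_space] measurable_iter by (simp add: measurable_sets)

lemma measurable_inv_iter: "\<sigma> ^^ n \<in> M \<rightarrow>\<^sub>M M"
proof (rule measurableI)
  show "x \<in> space M \<Longrightarrow> (\<sigma> ^^ n) x \<in> space M" for x by (rule inv_iter_in_space)
  show "A \<in> sets M \<Longrightarrow> (\<sigma> ^^ n) -` A \<inter> space M \<in> sets M" for A
    using inv_iter_vimage[OF sets.sets_into_space] image_iter_sets by simp
qed

lemma image_vimage_iter:
  assumes "A \<subseteq> space M"
  shows "(\<tau> ^^ n) ` ((\<tau> ^^ n) -` A \<inter> space M) = A"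
  unfolding image_inv_into_bij_betw[OF bij_iter assms, symmetric]
  using bij_iter assms by (intro image_inv_into_cancel) (simp_all add: bij_betw_def)

lemma vimage_image_iter:
  assumes "A \<subseteq> space M"
  shows "(\<tau> ^^ n) -` (\<tau> ^^ n) ` A \<inter> space M = A"
proof -
  have sub: "(\<tau> ^^ n) ` A \<subseteq> space M" using assms iter_in_space by auto
  show ?thesis
    unfolding image_inv_into_bij_betw[OF bij_iter sub, symmetric]
    using bij_iter assms by (intro inv_into_image_cancel) (simp_all add: bij_betw_def)
qed

lemma emeasure_image_iter_le:
  "A \<in> sets M \<Longrightarrow> emeasure M ((\<tau> ^^ n) ` A) \<le> ennreal (c' ^ n) * emeasure M A"
proof (induction n)
  case (Suc n)
  have "emeasure M ((\<tau> ^^ Suc n) ` A) \<le> ennreal c' * emeasure M ((\<tau> ^^ n) ` A)"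
    using emeasure_image_le[OF image_iter_sets[OF Suc.prems]] by (simp add: image_comp)
  also have "\<dots> \<le> ennreal c' * (ennreal (c' ^ n) * emeasure M A)"
    using Suc by (intro mult_left_mono) auto
  finally show ?case using nonneg by (simp add: ennreal_mult mult.assoc)
qed simp

lemma emeasure_vimage_iter_le:
  "A \<in> sets M \<Longrightarrow> emeasure M ((\<tau> ^^ n) -` A \<inter> space M) \<le> ennreal (c ^ n) * emeasure M A"
proof (induction n)
  case (Suc n)
  have eq: "(\<tau> ^^ Suc n) -` A \<inter> space M = \<tau> -` ((\<tau> ^^ n) -` A \<inter> space M) \<inter> space M"
    using measurable_space[OF measurable] unfolding funpow_Suc_right by auto
  have "(\<tau> ^^ n) -` A \<inter> space M \<in> sets M"
    using measurable_iter Suc.prems by (simp add: measurable_sets)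
  then have "emeasure M ((\<tau> ^^ Suc n) -` A \<inter> space M)
      \<le> ennreal c * emeasure M ((\<tau> ^^ n) -` A \<inter> space M)"
    unfolding eq by (rule emeasure_vimage_le)
  also have "\<dots> \<le> ennreal c * (ennreal (c ^ n) * emeasure M A)"
    using Suc by (intro mult_left_mono) auto
  also have "\<dots> = ennreal (c ^ Suc n) * emeasure M A"
    using nonneg by (simp add: ennreal_mult mult.assoc)
  finally show ?case .
qed simp

lemma Aplus_image_iter:
  assumes A: "A \<in> Aplus M"
  shows "(\<tau> ^^ n) ` A \<in> Aplus M"
proof (rule Aplus_of_emeasure_comparable[OF A image_iter_sets])
  have A_sets: "A \<in> sets M" using A by (simp add: Aplus_def)
  then show "A \<in> sets M" "emeasure M ((\<tau> ^^ n) ` A) \<le> ennreal (c' ^ n) * emeasure M A"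
    by (simp_all add: emeasure_image_iter_le)
  show "emeasure M A \<le> ennreal (c ^ n) * emeasure M ((\<tau> ^^ n) ` A)"
    using emeasure_vimage_iter_le[of "(\<tau> ^^ n) ` A" n, OF image_iter_sets[OF A_sets]]
      vimage_image_iter[OF sets.sets_into_space[OF A_sets]] by simp
qed

lemma Aplus_inv_image_iter:
  assumes A: "A \<in> Aplus M"
  shows "(\<sigma> ^^ n) ` A \<in> Aplus M"
proof (rule Aplus_of_emeasure_comparable[OF A inv_iter_image_sets])
  have A_sets: "A \<in> sets M" using A by (simp add: Aplus_def)
  note image = inv_iter_image[OF sets.sets_into_space[OF A_sets]]
  show "A \<in> sets M" by (rule A_sets)
  show "emeasure M ((\<sigma> ^^ n) ` A) \<le> ennreal (c ^ n) * emeasure M A"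
    unfolding image by (rule emeasure_vimage_iter_le[OF A_sets])
  show "emeasure M A \<le> ennreal (c' ^ n) * emeasure M ((\<sigma> ^^ n) ` A)"
    using emeasure_image_iter_le[of "(\<sigma> ^^ n) ` A" n, OF inv_iter_image_sets[OF A_sets]]
      image_vimage_iter[OF sets.sets_into_space[OF A_sets]] unfolding image by simp
qed

lemma iter_inv_iter_image:
  assumes "A \<subseteq> space M"
  shows "(\<tau> ^^ n) ` (\<sigma> ^^ n) ` A = A"
  unfolding inv_iter_image[OF assms] by (rule image_vimage_iter[OF assms])

lemma inv_iter_iter_image:
  assumes "A \<subseteq> space M"
  shows "(\<sigma> ^^ n) ` (\<tau> ^^ n) ` A = A"
proof -
  have "(\<tau> ^^ n) ` A \<subseteq> space M" using assms iter_in_space by auto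
  then have "(\<sigma> ^^ n) ` (\<tau> ^^ n) ` A = (\<tau> ^^ n) -` (\<tau> ^^ n) ` A \<inter> space M"
    by (rule inv_iter_image)
  also have "\<dots> = A" by (rule vimage_image_iter[OF assms])
  finally show ?thesis .
qed

lemma distr_fun_comp_iter:
  "distr_fun M (g \<circ> (\<tau> ^^ n)) l = emeasure M ((\<sigma> ^^ n) ` {x \<in> space M. l < \<bar>g x\<bar>})"
proof -
  have "distr_fun M (g \<circ> (\<tau> ^^ n)) l = emeasure M ((\<tau> ^^ n) -` {x \<in> space M. l < \<bar>g x\<bar>} \<inter> space M)"
    by (rule distr_fun_comp) (rule iter_in_space)
  then show ?thesis by (subst inv_iter_image) auto
qed

lemma distr_fun_comp_inv_iter:
  "distr_fun M (g \<circ> (\<sigma> ^^ n)) l = emeasure M ((\<tau> ^^ n) ` {x \<in> space M. l < \<bar>g x\<bar>})"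
proof -
  have "distr_fun M (g \<circ> (\<sigma> ^^ n)) l = emeasure M ((\<sigma> ^^ n) -` {x \<in> space M. l < \<bar>g x\<bar>} \<inter> space M)"
    by (rule distr_fun_comp) (rule inv_iter_in_space)
  then show ?thesis by (subst (asm) inv_iter_vimage) auto
qed

end

section \<open>Geometric decay\<close>

lemma image_funpow:
  fixes f :: "'a \<Rightarrow> 'a"
  shows "((\<lambda>B. f ` B) ^^ k) A = (f ^^ k) ` A"
  by (induction k) (simp_all add: image_comp)

text \<open>A set halved by \<open>F\<close> is not halved by the inverse map \<open>G\<close> at its image, so by the
  dichotomy \<open>F\<close> halves the image again.\<close>
lemma halving_funpow:
  fixes f :: "'b \<Rightarrow> real"
  assumes closed: "\<And>B. B \<in> P \<Longrightarrow> F B \<in> P"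
    and cancel: "\<And>B. B \<in> P \<Longrightarrow> G (F B) = B"
    and pos: "\<And>B. B \<in> P \<Longrightarrow> 0 < f B"
    and dichotomy: "\<And>B. B \<in> P \<Longrightarrow> f (G B) \<le> f B / 2 \<or> f (F B) \<le> f B / 2"
    and A: "A \<in> P" "f (F A) \<le> f A / 2"
  shows "f ((F ^^ k) A) \<le> f A / 2 ^ k"
proof -
  have halved: "(F ^^ k) A \<in> P \<and> f (F ((F ^^ k) A)) \<le> f ((F ^^ k) A) / 2" for k
  proof (induction k)
    case (Suc k)
    define B where "B = (F ^^ k) A"
    have B: "B \<in> P" "f (F B) \<le> f B / 2" using Suc by (simp_all add: B_def)
    then have "\<not> f (G (F B)) \<le> f (F B) / 2" using cancel pos closed by fastforce
    then show ?case using dichotomy[of "F B"] closed B by (simp add: B_def)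
  qed (use A in simp)
  show ?thesis
  proof (induction k)
    case (Suc k)
    have "f ((F ^^ Suc k) A) \<le> f ((F ^^ k) A) / 2" using halved[of k] by simp
    also have "\<dots> \<le> f A / 2 ^ k / 2" using Suc by simp
    finally show ?case by (simp add: mult.commute)
  qed simp
qed

lemma uniform_ratio_divergence:
  fixes f :: "'b \<Rightarrow> real" and it :: "nat \<Rightarrow> 'b \<Rightarrow> 'b"
  assumes n: "0 < n" and D: "0 < D"
    and pos: "\<And>A m. A \<in> P \<Longrightarrow> 0 < f (it m A)"
    and decay: "\<And>A m. A \<in> P \<Longrightarrow> f (it m A) \<le> D * f A / 2 ^ (m div n)"
  shows "\<forall>K. \<exists>N. \<forall>m\<ge>N. \<forall>A\<in>P. f A / f (it m A) \<ge> K"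
proof
  fix K :: real
  obtain k :: nat where k: "K * D \<le> 2 ^ k"
    using real_arch_pow[of 2 "K * D"] by (auto intro: less_imp_le)
  have "K \<le> f A / f (it m A)" if m: "k * n \<le> m" and A: "A \<in> P" for m A
  proof -
    have "0 < D * f A / 2 ^ (m div n)" using pos[OF A] decay[OF A] by (rule less_le_trans)
    then have fA: "0 < f A" using D by (simp add: zero_less_divide_iff zero_less_mult_iff)
    have "k \<le> m div n" using m n by (metis div_le_mono div_mult_self_is_m)
    then have "K * D \<le> 2 ^ (m div n)" using k by (meson order_trans one_le_numeral power_increasing)
    then have "K * (D * f A / 2 ^ (m div n)) \<le> f A"
      using fA by (simp add: field_simps mult_right_mono)
    moreover have "K * f (it m A) \<le> K * (D * f A / 2 ^ (m div n))" if "0 \<le> K"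
      using decay[OF A] that by (rule mult_left_mono)
    moreover have "K * f (it m A) \<le> f A" if "K < 0"
      using mult_neg_pos[OF that pos[OF A, of m]] fA by linarith
    ultimately have "K * f (it m A) \<le> f A" by force
    then show ?thesis using pos[OF A, of m] by (simp add: pos_le_divide_eq)
  qed
  then show "\<exists>N. \<forall>m\<ge>N. \<forall>A\<in>P. f A / f (it m A) \<ge> K" by blast
qed

section \<open>Composition operators\<close>

locale composition_system = bounded_bijection +
  fixes \<phi> h :: "real \<Rightarrow> real"
  assumes orlicz: "orlicz_function \<phi>" and weight: "weight M h"
begin

lemmas fund_Aplus_pos = fund_pos[OF orlicz weight]

lemma OL_norm_indicator_comp_iter:
  assumes A: "A \<in> Aplus M" and a: "0 < a"
  shows "OL_norm \<phi> h M ((\<lambda>x. a * indicator A x) \<circ> (\<tau> ^^ n)) = a / fund \<phi> h M ((\<sigma> ^^ n) ` A)"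
proof -
  have "x \<in> (\<sigma> ^^ n) ` A \<longleftrightarrow> (\<tau> ^^ n) x \<in> A" if "x \<in> space M" for x
    using inv_iter_image[OF sets.sets_into_space, of A n] A that by (auto simp: Aplus_def)
  then have "OL_norm \<phi> h M ((\<lambda>x. a * indicator A x) \<circ> (\<tau> ^^ n))
      = OL_norm \<phi> h M (\<lambda>x. a * indicator ((\<sigma> ^^ n) ` A) x)"
    by (intro OL_norm_cong) (simp add: indicator_def)
  also have "\<dots> = a / fund \<phi> h M ((\<sigma> ^^ n) ` A)"
    by (rule OL_norm_indicator[OF orlicz weight Aplus_inv_image_iter[OF A] a])
  finally show ?thesis .
qed

lemma OL_norm_indicator_comp_inv_iter:
  assumes A: "A \<in> Aplus M" and a: "0 < a"
  shows "OL_norm \<phi> h M ((\<lambda>x. a * indicator A x) \<circ> (\<sigma> ^^ n)) = a / fund \<phi> h M ((\<tau> ^^ n) ` A)"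
proof -
  have "x \<in> (\<tau> ^^ n) ` A \<longleftrightarrow> (\<sigma> ^^ n) x \<in> A" if "x \<in> space M" for x
    using inv_iter_vimage[OF sets.sets_into_space, of A n] A that by (auto simp: Aplus_def)
  then have "OL_norm \<phi> h M ((\<lambda>x. a * indicator A x) \<circ> (\<sigma> ^^ n))
      = OL_norm \<phi> h M (\<lambda>x. a * indicator ((\<tau> ^^ n) ` A) x)"
    by (intro OL_norm_cong) (simp add: indicator_def)
  also have "\<dots> = a / fund \<phi> h M ((\<tau> ^^ n) ` A)"
    by (rule OL_norm_indicator[OF orlicz weight Aplus_image_iter[OF A] a])
  finally show ?thesis .
qed

lemma fund_halving_of_expansive:
  assumes expansive: "\<forall>g\<in>OL_space \<phi> h M. OL_norm \<phi> h M g = 1 \<longrightarrow>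
      OL_norm \<phi> h M (g \<circ> (\<tau> ^^ n)) \<ge> 2 \<or> OL_norm \<phi> h M (g \<circ> (\<sigma> ^^ n)) \<ge> 2"
    and A: "A \<in> Aplus M"
  shows "fund \<phi> h M ((\<sigma> ^^ n) ` A) \<le> fund \<phi> h M A / 2 \<or> fund \<phi> h M ((\<tau> ^^ n) ` A) \<le> fund \<phi> h M A / 2"
proof -
  define a where "a = fund \<phi> h M A"
  have a: "0 < a" using fund_Aplus_pos[OF A] by (simp add: a_def)
  have "OL_norm \<phi> h M (\<lambda>x. a * indicator A x) = 1"
    using OL_norm_indicator[OF orlicz weight A a] a by (simp add: a_def)
  then have "2 \<le> OL_norm \<phi> h M ((\<lambda>x. a * indicator A x) \<circ> (\<tau> ^^ n)) \<or>
      2 \<le> OL_norm \<phi> h M ((\<lambda>x. a * indicator A x) \<circ> (\<sigma> ^^ n))"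
    using expansive OL_space_indicator[OF orlicz weight A] by blast
  then have "2 \<le> a / fund \<phi> h M ((\<sigma> ^^ n) ` A) \<or> 2 \<le> a / fund \<phi> h M ((\<tau> ^^ n) ` A)"
    unfolding OL_norm_indicator_comp_iter[OF A a] OL_norm_indicator_comp_inv_iter[OF A a] .
  then show ?thesis
    using fund_Aplus_pos[OF Aplus_inv_image_iter[OF A]] fund_Aplus_pos[OF Aplus_image_iter[OF A]]
    by (auto simp: a_def le_divide_eq)
qed

lemma fund_image_le:
  assumes bounded: "\<forall>g\<in>OL_space \<phi> h M. g \<circ> \<tau> \<in> OL_space \<phi> h M \<and>
      OL_norm \<phi> h M (g \<circ> \<tau>) \<le> C * OL_norm \<phi> h M g"
    and B: "B \<in> Aplus M"
  shows "fund \<phi> h M (\<tau> ` B) \<le> C * fund \<phi> h M B"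
proof -
  have \<tau>B: "\<tau> ` B \<in> Aplus M" using Aplus_image_iter[OF B, of 1] by simp
  have "(\<sigma> ^^ 1) ` (\<tau> ^^ 1) ` B = B"
    using B by (intro inv_iter_iter_image sets.sets_into_space) (simp add: Aplus_def)
  then have "1 / fund \<phi> h M B = OL_norm \<phi> h M ((\<lambda>x. 1 * indicator (\<tau> ` B) x) \<circ> \<tau>)"
    using OL_norm_indicator_comp_iter[OF \<tau>B, of 1 1] by simp
  also have "\<dots> \<le> C * OL_norm \<phi> h M (\<lambda>x. 1 * indicator (\<tau> ` B) x)"
    using bounded OL_space_indicator[OF orlicz weight \<tau>B, of 1] by blast
  also have "\<dots> = C * (1 / fund \<phi> h M (\<tau> ` B))"
    using OL_norm_indicator[OF orlicz weight \<tau>B, of 1] by simp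
  finally show ?thesis using fund_Aplus_pos[OF B] fund_Aplus_pos[OF \<tau>B] by (simp add: field_simps)
qed

lemma fund_image_iter_le:
  assumes step: "\<And>B. B \<in> Aplus M \<Longrightarrow> fund \<phi> h M (\<tau> ` B) \<le> C * fund \<phi> h M B" and C: "0 \<le> C"
    and B: "B \<in> Aplus M"
  shows "fund \<phi> h M ((\<tau> ^^ r) ` B) \<le> C ^ r * fund \<phi> h M B"
proof (induction r)
  case (Suc r)
  have "fund \<phi> h M ((\<tau> ^^ Suc r) ` B) = fund \<phi> h M (\<tau> ` (\<tau> ^^ r) ` B)" by (simp add: image_comp)
  also have "\<dots> \<le> C * fund \<phi> h M ((\<tau> ^^ r) ` B)" by (rule step[OF Aplus_image_iter[OF B]])
  also have "\<dots> \<le> C * (C ^ r * fund \<phi> h M B)" using Suc C by (rule mult_left_mono)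
  finally show ?case by simp
qed simp

lemma fund_decay_iter:
  assumes n: "0 < n"
    and halving: "\<And>B. B \<in> Aplus M \<Longrightarrow>
      fund \<phi> h M ((\<sigma> ^^ n) ` B) \<le> fund \<phi> h M B / 2 \<or> fund \<phi> h M ((\<tau> ^^ n) ` B) \<le> fund \<phi> h M B / 2"
    and step: "\<And>B. B \<in> Aplus M \<Longrightarrow> fund \<phi> h M (\<tau> ` B) \<le> C * fund \<phi> h M B" and C: "1 \<le> C"
    and A: "A \<in> Aplus M" "fund \<phi> h M ((\<tau> ^^ n) ` A) \<le> fund \<phi> h M A / 2"
  shows "fund \<phi> h M ((\<tau> ^^ m) ` A) \<le> C ^ n * fund \<phi> h M A / 2 ^ (m div n)"
proof -
  define k where "k = m div n"
  have "(\<tau> ^^ m) ` A = (\<tau> ^^ (m mod n)) ` (\<tau> ^^ (n * k)) ` A"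
    using mod_mult_div_eq[of m n] by (metis funpow_add image_comp k_def)
  then have "fund \<phi> h M ((\<tau> ^^ m) ` A) \<le> C ^ (m mod n) * fund \<phi> h M ((\<tau> ^^ (n * k)) ` A)"
    using fund_image_iter_le[OF step _ Aplus_image_iter[OF A(1)]] C by simp
  also have "\<dots> \<le> C ^ n * (fund \<phi> h M A / 2 ^ k)"
  proof (intro mult_mono)
    show "fund \<phi> h M ((\<tau> ^^ (n * k)) ` A) \<le> fund \<phi> h M A / 2 ^ k"
    using halving_funpow[of "Aplus M" "\<lambda>B. (\<tau> ^^ n) ` B" "\<lambda>B. (\<sigma> ^^ n) ` B" "fund \<phi> h M" A k]
      Aplus_image_iter inv_iter_iter_image[OF sets.sets_into_space] fund_Aplus_pos halving A
      by (simp add: image_funpow funpow_mult Aplus_def)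
    show "C ^ (m mod n) \<le> C ^ n" using C n by (intro power_increasing) auto
  qed (use C less_imp_le[OF fund_Aplus_pos[OF Aplus_image_iter[OF A(1)]]] in auto)
  finally show ?thesis by (simp add: k_def)
qed

lemma fund_decay_inv_iter:
  assumes n: "0 < n"
    and halving: "\<And>B. B \<in> Aplus M \<Longrightarrow>
      fund \<phi> h M ((\<sigma> ^^ n) ` B) \<le> fund \<phi> h M B / 2 \<or> fund \<phi> h M ((\<tau> ^^ n) ` B) \<le> fund \<phi> h M B / 2"
    and step: "\<And>B. B \<in> Aplus M \<Longrightarrow> fund \<phi> h M (\<tau> ` B) \<le> C * fund \<phi> h M B" and C: "1 \<le> C"
    and A: "A \<in> Aplus M" "fund \<phi> h M ((\<sigma> ^^ n) ` A) \<le> fund \<phi> h M A / 2"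
  shows "fund \<phi> h M ((\<sigma> ^^ m) ` A) \<le> C ^ n * fund \<phi> h M A / 2 ^ (m div n)"
proof -
  define k where "k = Suc (m div n)"
  define r where "r = n * k - m"
  have "m < n * k" "n * k \<le> m + n"
    using mod_less_divisor[OF n, of m] mod_mult_div_eq[of m n] unfolding k_def mult_Suc_right
    by linarith+
  then have r: "n * k = r + m" "r \<le> n" by (simp_all add: r_def)
  have "(\<sigma> ^^ m) ` A \<subseteq> space M"
    using inv_iter_in_space sets.sets_into_space[of A M] A(1) by (auto simp: Aplus_def)
  then have "(\<sigma> ^^ m) ` A = (\<tau> ^^ r) ` (\<sigma> ^^ (n * k)) ` A"
    unfolding r funpow_add image_comp[symmetric] by (simp add: iter_inv_iter_image)
  then have "fund \<phi> h M ((\<sigma> ^^ m) ` A) \<le> C ^ r * fund \<phi> h M ((\<sigma> ^^ (n * k)) ` A)"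
    using fund_image_iter_le[OF step _ Aplus_inv_image_iter[OF A(1)]] C by simp
  also have "\<dots> \<le> C ^ n * (fund \<phi> h M A / 2 ^ k)"
  proof (intro mult_mono)
    show "fund \<phi> h M ((\<sigma> ^^ (n * k)) ` A) \<le> fund \<phi> h M A / 2 ^ k"
    using halving_funpow[of "Aplus M" "\<lambda>B. (\<sigma> ^^ n) ` B" "\<lambda>B. (\<tau> ^^ n) ` B" "fund \<phi> h M" A k]
      Aplus_inv_image_iter iter_inv_iter_image[OF sets.sets_into_space] fund_Aplus_pos halving A
      by (simp add: image_funpow funpow_mult Aplus_def disj_commute)
    show "C ^ r \<le> C ^ n" using C r by (intro power_increasing) auto
  qed (use C less_imp_le[OF fund_Aplus_pos[OF Aplus_inv_image_iter[OF A(1)]]] in auto)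
  also have "\<dots> \<le> C ^ n * (fund \<phi> h M A / 2 ^ (m div n))"
    using C fund_Aplus_pos[OF A(1)] by (intro mult_left_mono divide_left_mono) (auto simp: k_def)
  finally show ?thesis by simp
qed

lemma fund_split_of_expansive:
  assumes bounded: "\<forall>g\<in>OL_space \<phi> h M. g \<circ> \<tau> \<in> OL_space \<phi> h M \<and>
      OL_norm \<phi> h M (g \<circ> \<tau>) \<le> C * OL_norm \<phi> h M g"
    and expansive: "comp_unif_expansive \<phi> h M \<tau>"
  shows "\<exists>AB AC. Aplus M = AB \<union> AC \<and>
    (\<forall>K. \<exists>N. \<forall>n\<ge>N. \<forall>A\<in>AB. fund \<phi> h M A / fund \<phi> h M ((\<tau> ^^ n) ` A) \<ge> K) \<and>
    (\<forall>K. \<exists>N. \<forall>n\<ge>N. \<forall>A\<in>AC. fund \<phi> h M A / fund \<phi> h M ((\<sigma> ^^ n) ` A) \<ge> K)"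
proof -
  obtain n where "\<forall>g\<in>OL_space \<phi> h M. OL_norm \<phi> h M g = 1 \<longrightarrow>
      OL_norm \<phi> h M (g \<circ> (\<tau> ^^ n)) \<ge> 2 \<or> OL_norm \<phi> h M (g \<circ> (\<sigma> ^^ n)) \<ge> 2"
    using expansive unfolding comp_unif_expansive_def by blast
  note halving = fund_halving_of_expansive[OF this]
  define AB where "AB = {A \<in> Aplus M. fund \<phi> h M ((\<tau> ^^ n) ` A) \<le> fund \<phi> h M A / 2}"
  define AC where "AC = {A \<in> Aplus M. fund \<phi> h M ((\<sigma> ^^ n) ` A) \<le> fund \<phi> h M A / 2}"
  have split: "Aplus M = AB \<union> AC" using halving by (auto simp: AB_def AC_def)
  show ?thesis
  proof (cases "n = 0")
    case True
    then have "AB = {}" "AC = {}" using fund_Aplus_pos by (force simp: AB_def AC_def)+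
    then show ?thesis using split by blast
  next
    case False
    define C' where "C' = max 1 C"
    have step: "fund \<phi> h M (\<tau> ` B) \<le> C' * fund \<phi> h M B" if "B \<in> Aplus M" for B
      using fund_image_le[OF bounded that] mult_right_mono[of C C' "fund \<phi> h M B"]
        fund_Aplus_pos[OF that] unfolding C'_def by linarith
    have C': "1 \<le> C'" by (simp add: C'_def)
    have "\<forall>K. \<exists>N. \<forall>m\<ge>N. \<forall>A\<in>AB. fund \<phi> h M A / fund \<phi> h M ((\<tau> ^^ m) ` A) \<ge> K"
      by (rule uniform_ratio_divergence[where D = "C' ^ n" and it = "\<lambda>m A. (\<tau> ^^ m) ` A"])
        (use False C' fund_decay_iter[OF _ halving step C'] fund_Aplus_pos Aplus_image_iter
          in \<open>auto simp: AB_def\<close>)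
    moreover have "\<forall>K. \<exists>N. \<forall>m\<ge>N. \<forall>A\<in>AC. fund \<phi> h M A / fund \<phi> h M ((\<sigma> ^^ m) ` A) \<ge> K"
      by (rule uniform_ratio_divergence[where D = "C' ^ n" and it = "\<lambda>m A. (\<sigma> ^^ m) ` A"])
        (use False C' fund_decay_inv_iter[OF _ halving step C'] fund_Aplus_pos Aplus_inv_image_iter
          in \<open>auto simp: AC_def\<close>)
    ultimately show ?thesis using split by blast
  qed
qed

lemma modular_comp_iter_le:
  assumes g: "g \<in> borel_measurable M"
  shows "modular \<phi> h M (g \<circ> (\<tau> ^^ n)) \<le> ennreal (max 1 (c ^ n)) * modular \<phi> h M g"
proof (rule modular_le_of_distr_fun_le[OF orlicz weight g])
  show "g \<circ> (\<tau> ^^ n) \<in> borel_measurable M" using measurable_comp[OF measurable_iter g] .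
  fix l
  have E: "{x \<in> space M. l < \<bar>g x\<bar>} \<in> sets M" using g by measurable
  have "distr_fun M (g \<circ> (\<tau> ^^ n)) l \<le> ennreal (c ^ n) * distr_fun M g l"
    using emeasure_vimage_iter_le[OF E, of n]
    unfolding distr_fun_comp_iter inv_iter_image[OF sets.sets_into_space[OF E]]
    by (simp add: distr_fun_def)
  also have "\<dots> \<le> ennreal (max 1 (c ^ n)) * distr_fun M g l"
    by (intro mult_right_mono ennreal_leI) auto
  finally show "distr_fun M (g \<circ> (\<tau> ^^ n)) l \<le> ennreal (max 1 (c ^ n)) * distr_fun M g l" .
qed simp

lemma modular_comp_inv_iter_le:
  assumes g: "g \<in> borel_measurable M"
  shows "modular \<phi> h M (g \<circ> (\<sigma> ^^ n)) \<le> ennreal (max 1 (c' ^ n)) * modular \<phi> h M g"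
proof (rule modular_le_of_distr_fun_le[OF orlicz weight g])
  show "g \<circ> (\<sigma> ^^ n) \<in> borel_measurable M" using measurable_comp[OF measurable_inv_iter g] .
  fix l
  have E: "{x \<in> space M. l < \<bar>g x\<bar>} \<in> sets M" using g by measurable
  have "distr_fun M (g \<circ> (\<sigma> ^^ n)) l \<le> ennreal (c' ^ n) * distr_fun M g l"
    using emeasure_image_iter_le[OF E, of n] unfolding distr_fun_comp_inv_iter
    by (simp add: distr_fun_def)
  also have "\<dots> \<le> ennreal (max 1 (c' ^ n)) * distr_fun M g l"
    by (intro mult_right_mono ennreal_leI) auto
  finally show "distr_fun M (g \<circ> (\<sigma> ^^ n)) l \<le> ennreal (max 1 (c' ^ n)) * distr_fun M g l" .
qed simp

lemma modular_expansion:
  assumes g: "g \<in> borel_measurable M"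
    and expansion: "\<And>E. E \<in> sets M \<Longrightarrow> ennreal K * Wext M h (emeasure M E)
      \<le> Wext M h (emeasure M ((\<tau> ^^ n) ` E)) + Wext M h (emeasure M ((\<sigma> ^^ n) ` E))"
  shows "ennreal K * modular \<phi> h M g \<le> modular \<phi> h M (g \<circ> (\<sigma> ^^ n)) + modular \<phi> h M (g \<circ> (\<tau> ^^ n))"
proof -
  let ?L = "\<lambda>q s. indicator {0..} s * Wext M h (distr_fun M q (phi_inv \<phi> s))"
  have g1: "g \<circ> (\<sigma> ^^ n) \<in> borel_measurable M" using measurable_comp[OF measurable_inv_iter g] .
  have g2: "g \<circ> (\<tau> ^^ n) \<in> borel_measurable M" using measurable_comp[OF measurable_iter g] .
  have "ennreal K * modular \<phi> h M g = (\<integral>\<^sup>+ s. ennreal K * ?L g s \<partial>lborel)"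
    unfolding modular_layer_cake[OF orlicz weight g]
    by (rule nn_integral_cmult[symmetric]) (rule borel_measurable_layer_cake_integrand[OF orlicz g])
  also have "\<dots> \<le> (\<integral>\<^sup>+ s. ?L (g \<circ> (\<sigma> ^^ n)) s + ?L (g \<circ> (\<tau> ^^ n)) s \<partial>lborel)"
  proof (intro nn_integral_mono)
    fix s
    let ?E = "{x \<in> space M. phi_inv \<phi> s < \<bar>g x\<bar>}"
    have "?E \<in> sets M" using g by measurable
    then have "ennreal K * Wext M h (distr_fun M g (phi_inv \<phi> s)) \<le>
        Wext M h (distr_fun M (g \<circ> (\<sigma> ^^ n)) (phi_inv \<phi> s)) +
        Wext M h (distr_fun M (g \<circ> (\<tau> ^^ n)) (phi_inv \<phi> s))"
      unfolding distr_fun_comp_iter distr_fun_comp_inv_iter by (simp add: distr_fun_def expansion)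
    then show "ennreal K * ?L g s \<le> ?L (g \<circ> (\<sigma> ^^ n)) s + ?L (g \<circ> (\<tau> ^^ n)) s"
      by (simp add: indicator_def)
  qed
  also have "\<dots> = modular \<phi> h M (g \<circ> (\<sigma> ^^ n)) + modular \<phi> h M (g \<circ> (\<tau> ^^ n))"
    unfolding modular_layer_cake[OF orlicz weight g1] modular_layer_cake[OF orlicz weight g2]
    by (intro nn_integral_add borel_measurable_layer_cake_integrand[OF orlicz] g1 g2)
  finally show ?thesis .
qed

lemma Wext_top_of_fund_split:
  assumes sf: "sigma_finite_measure M" and X: "emeasure M (space M) = \<infinity>"
    and split: "Aplus M = AB \<union> AC"
    and limB: "\<forall>K. \<exists>N. \<forall>n\<ge>N. \<forall>A\<in>AB. fund \<phi> h M A / fund \<phi> h M ((\<tau> ^^ n) ` A) \<ge> K"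
    and limC: "\<forall>K. \<exists>N. \<forall>n\<ge>N. \<forall>A\<in>AC. fund \<phi> h M A / fund \<phi> h M ((\<sigma> ^^ n) ` A) \<ge> K"
  shows "Wext M h \<infinity> = \<infinity>"
proof (rule ccontr)
  assume "Wext M h \<infinity> \<noteq> \<infinity>"
  then obtain A where A: "A \<in> Aplus M" and near_inf: "\<forall>B\<in>Aplus M. fund \<phi> h M A < 2 * fund \<phi> h M B"
    using Aplus_fund_near_inf[OF orlicz weight sf X] by blast
  obtain B where B: "B \<in> Aplus M" "2 \<le> fund \<phi> h M A / fund \<phi> h M B"
  proof (cases "A \<in> AB")
    case True
    obtain N where "\<forall>n\<ge>N. \<forall>A\<in>AB. fund \<phi> h M A / fund \<phi> h M ((\<tau> ^^ n) ` A) \<ge> 2"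
      using limB by blast
    then show ?thesis using True by (intro that[OF Aplus_image_iter[OF A]]) auto
  next
    case False
    then have "A \<in> AC" using A split by blast
    obtain N where "\<forall>n\<ge>N. \<forall>A\<in>AC. fund \<phi> h M A / fund \<phi> h M ((\<sigma> ^^ n) ` A) \<ge> 2"
      using limC by blast
    then show ?thesis using \<open>A \<in> AC\<close> by (intro that[OF Aplus_inv_image_iter[OF A]]) auto
  qed
  then show False using near_inf fund_Aplus_pos[OF B(1)] by (auto simp: le_divide_eq)
qed

lemma Wext_expansion:
  assumes top: "emeasure M (space M) = \<infinity> \<Longrightarrow> Wext M h \<infinity> = \<infinity>"
    and split: "Aplus M = AB \<union> AC" and K: "1 \<le> K"
    and ratioB: "\<forall>A\<in>AB. fund \<phi> h M A / fund \<phi> h M ((\<tau> ^^ n) ` A) \<ge> K"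
    and ratioC: "\<forall>A\<in>AC. fund \<phi> h M A / fund \<phi> h M ((\<sigma> ^^ n) ` A) \<ge> K"
    and E: "E \<in> sets M"
  shows "ennreal K * Wext M h (emeasure M E)
    \<le> Wext M h (emeasure M ((\<tau> ^^ n) ` E)) + Wext M h (emeasure M ((\<sigma> ^^ n) ` E))"
proof (cases "emeasure M E = \<infinity>")
  case True
  have "emeasure M E \<le> ennreal (c ^ n) * emeasure M ((\<tau> ^^ n) ` E)"
    using emeasure_vimage_iter_le[OF image_iter_sets[OF E], of n n]
      vimage_image_iter[OF sets.sets_into_space[OF E]] by simp
  then have "emeasure M ((\<tau> ^^ n) ` E) = \<infinity>"
    using True by (auto simp: top_unique ennreal_mult_eq_top_iff)
  moreover have "emeasure M (space M) = \<infinity>"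
    using True emeasure_space[of M E] by (simp add: top_unique)
  ultimately show ?thesis using top by simp
next
  case finite: False
  show ?thesis
  proof (cases "emeasure M E = 0")
    case False
    then have E': "E \<in> Aplus M" using E finite by (simp add: Aplus_def less_top zero_less_iff_neq_zero)
    have "ennreal K * Wext M h (emeasure M E) \<le> Wext M h (emeasure M ((\<tau> ^^ n) ` E))" if "E \<in> AB"
      using Wext_ratio_ge_of_fund_ratio_ge[OF orlicz weight E' Aplus_image_iter[OF E'] K] ratioB that
      by blast
    moreover have "ennreal K * Wext M h (emeasure M E) \<le> Wext M h (emeasure M ((\<sigma> ^^ n) ` E))" if "E \<in> AC"
      using Wext_ratio_ge_of_fund_ratio_ge[OF orlicz weight E' Aplus_inv_image_iter[OF E'] K] ratioC that
      by blast
    ultimately show ?thesis using E' split by (auto intro: order_trans add_increasing add_increasing2)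
  qed simp
qed

lemma expansive_of_fund_split:
  assumes Kd: "0 < Kd" "\<forall>s>0. \<phi> (2 * s) \<le> Kd * \<phi> s" and sf: "sigma_finite_measure M"
    and split: "Aplus M = AB \<union> AC"
    and limB: "\<forall>K. \<exists>N. \<forall>n\<ge>N. \<forall>A\<in>AB. fund \<phi> h M A / fund \<phi> h M ((\<tau> ^^ n) ` A) \<ge> K"
    and limC: "\<forall>K. \<exists>N. \<forall>n\<ge>N. \<forall>A\<in>AC. fund \<phi> h M A / fund \<phi> h M ((\<sigma> ^^ n) ` A) \<ge> K"
  shows "comp_unif_expansive \<phi> h M \<tau>"
proof -
  define K where "K = 2 * Kd\<^sup>2 + 1"
  obtain N1 where N1: "\<forall>n\<ge>N1. \<forall>A\<in>AB. fund \<phi> h M A / fund \<phi> h M ((\<tau> ^^ n) ` A) \<ge> K"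
    using limB by blast
  obtain N2 where N2: "\<forall>n\<ge>N2. \<forall>A\<in>AC. fund \<phi> h M A / fund \<phi> h M ((\<sigma> ^^ n) ` A) \<ge> K"
    using limC by blast
  define n where "n = max N1 N2"
  have "ennreal K * Wext M h (emeasure M E)
      \<le> Wext M h (emeasure M ((\<tau> ^^ n) ` E)) + Wext M h (emeasure M ((\<sigma> ^^ n) ` E))"
    if "E \<in> sets M" for E
    using Wext_expansion[OF Wext_top_of_fund_split[OF sf _ split limB limC] split _ _ _ that, of K n]
      N1 N2 by (simp add: K_def n_def)
  note expansion = modular_expansion[OF _ this]
  show ?thesis
    unfolding comp_unif_expansive_def
  proof (intro exI[of _ n] ballI impI)
    fix g assume g: "g \<in> OL_space \<phi> h M" and norm: "OL_norm \<phi> h M g = 1"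
    have g_meas: "g \<in> borel_measurable M" using g by (simp add: OL_space_def)
    have g_finite: "modular \<phi> h M g < \<infinity>" by (rule modular_finite_of_OL_space[OF orlicz weight Kd g])
    have big: "Kd < modular \<phi> h M (g \<circ> (\<sigma> ^^ n)) \<or> Kd < modular \<phi> h M (g \<circ> (\<tau> ^^ n))"
      using modular_summand_gt_of_OL_norm_eq_1[OF orlicz weight Kd norm g_finite] expansion[OF g_meas]
      by (simp add: K_def)
    have finite: "modular \<phi> h M (g \<circ> (\<sigma> ^^ n)) < \<infinity>" "modular \<phi> h M (g \<circ> (\<tau> ^^ n)) < \<infinity>"
      using modular_comp_inv_iter_le[OF g_meas, of n] modular_comp_iter_le[OF g_meas, of n] g_finite
      by (auto simp: ennreal_mult_less_top intro: le_less_trans)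
    show "2 \<le> OL_norm \<phi> h M (g \<circ> (\<tau> ^^ n)) \<or> 2 \<le> OL_norm \<phi> h M (g \<circ> (\<sigma> ^^ n))"
      using big OL_norm_ge_2[OF orlicz weight Kd] finite
        measurable_comp[OF measurable_iter g_meas] measurable_comp[OF measurable_inv_iter g_meas]
      by blast
  qed
qed

end

theorem mainTheorem3:
  fixes \<phi> h :: "real \<Rightarrow> real" and M :: "'a measure" and \<tau> :: "'a \<Rightarrow> 'a"
  assumes cds: "comp_dyn_system \<phi> h M \<tau>"
    and bij: "bij_betw \<tau> (space M) (space M)"
    and inv_bd: "\<exists>M'>0. \<forall>A\<in>sets M. emeasure M (\<tau> ` A) \<le> ennreal M' * emeasure M A"
    and d2: "delta2 \<phi>"
  shows "comp_unif_expansive \<phi> h M \<tau> \<longleftrightarrow>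
    (\<exists>AB AC. Aplus M = AB \<union> AC \<and>
       (\<forall>K::real. \<exists>N. \<forall>n\<ge>N. \<forall>A\<in>AB.
          fund \<phi> h M A / fund \<phi> h M ((\<tau> ^^ n) ` A) \<ge> K) \<and>
       (\<forall>K::real. \<exists>N. \<forall>n\<ge>N. \<forall>A\<in>AC.
          fund \<phi> h M A / fund \<phi> h M ((inv_into (space M) \<tau> ^^ n) ` A) \<ge> K))"
proof -
  obtain c C c' Kd where c: "0 < c" "\<forall>A\<in>sets M. emeasure M (\<tau> -` A \<inter> space M) \<le> ennreal c * emeasure M A"
    and C: "\<forall>g\<in>OL_space \<phi> h M. g \<circ> \<tau> \<in> OL_space \<phi> h M \<and>
      OL_norm \<phi> h M (g \<circ> \<tau>) \<le> C * OL_norm \<phi> h M g"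
    and c': "0 < c'" "\<forall>A\<in>sets M. emeasure M (\<tau> ` A) \<le> ennreal c' * emeasure M A"
    and Kd: "0 < Kd" "\<forall>s>0. \<phi> (2 * s) \<le> Kd * \<phi> s"
    using cds inv_bd d2 unfolding comp_dyn_system_def delta2_def by metis
  have sf: "sigma_finite_measure M" using cds by (simp add: comp_dyn_system_def)
  interpret composition_system M \<tau> c c' \<phi> h
    using cds bij c c' by unfold_locales (auto simp: comp_dyn_system_def)
  show ?thesis
    using fund_split_of_expansive[OF C] expansive_of_fund_split[OF Kd sf] by blast
qed

end
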